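(* Let $K\subset\mathbb{R}^n$ be a proper cone, let $\|\cdot\|$ be a $K$-monotone norm on $\mathbb{R}^n$, and let $\mathcal{X}\subset\mathcal{P}_\mathbb{N}$ be compact with respect to the Hausdorff metric. Then there exists $0<C<\infty$ such that for every $\mathcal{M}\in\mathcal{X}$ there is a $K$-monotone norm $v$ which is extremal for $\mathcal{S}(\mathcal{M},\mathbb{N})$ and satisfies $\operatorname{ecc}_{\|\cdot\|}(v)<C$.
   Context: A proper cone $K\subset\mathbb{R}^n$ is a nonempty set with $rK\subset K$ for all $r>0$ which is convex, pointed, closed and has nonempty interior. Write $x\ge_K y$ if $x-y\in K$. A face of $K$ is a cone $F\subseteq K$ with: $x\in F$, $x\ge_K y\ge_K0$ imply $y\in F$; $\{0\},K$ are trivial. $\pi(K)=\{A: AK\subset K\}$; $A\in\pi(K)$ is $K$-irreducible if no nontrivial face $F$ has $AF\subset F$. $\mathcal{P}_\mathbb{N}$ is the set of nonempty compact $\mathcal{M}\subset\pi(K)$ such that $\operatorname{conv}\mathcal{M}$ contains a $K$-irreducible element, equipped with the Hausdorff metric $H(\mathcal{M},\mathcal{N})=\max\{\max_{A\in\mathcal{M}}\operatorname{dist}(A,\mathcal{N}),\max_{B\in\mathcal{N}}\operatorname{dist}(B,\mathcal{M})\}$ (for some fixed matrix norm). Discrete semigroup $\mathcal{S}(\mathcal{M},\mathbb{N})=\bigcup_{t\in\mathbb{N}}\mathcal{S}_t$, $\mathcal{S}_0=\{I\}$, $\mathcal{S}_t=\{A_{t-1}\cdots A_0:A_s\in\mathcal{M}\}$;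 joint spectral radius $\rho=\lim_{t\to\infty}\sup\{\|S\|:S\in\mathcal{S}_t\}^{1/t}$. A norm $v$ is extremal if $v(Sx)\le\rho^tv(x)$ for all $x$, $t$, $S\in\mathcal{S}_t$; $K$-monotone if $x\ge_K y\ge_K0$ implies $v(x)\ge v(y)$. Eccentricity: $\operatorname{ecc}_{\|\cdot\|}(v)=\max\{v(x):\|x\|=1\}/\min\{v(x):\|x\|=1\}$. *)

theory Defs
  imports "HOL-Analysis.Analysis"
begin

type_synonym 'n rvec = "real ^ 'n"
type_synonym 'n rmat = "real ^ 'n ^ 'n"

definition is_cone :: "('n::finite) rvec set \<Rightarrow> bool" where
  "is_cone F \<longleftrightarrow> F \<noteq> {} \<and> (\<forall>r>0. \<forall>x\<in>F. r *\<^sub>R x \<in> F)"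

definition proper_cone :: "('n::finite) rvec set \<Rightarrow> bool" where
  "proper_cone K \<longleftrightarrow> is_cone K \<and> convex K \<and> K \<inter> uminus ` K = {0}
     \<and> closed K \<and> interior K \<noteq> {}"

definition cone_ge :: "('n::finite) rvec set \<Rightarrow> 'n rvec \<Rightarrow> 'n rvec \<Rightarrow> bool" where
  "cone_ge K x y \<longleftrightarrow> x - y \<in> K"

definition is_face :: "('n::finite) rvec set \<Rightarrow> 'n rvec set \<Rightarrow> bool" where
  "is_face K F \<longleftrightarrow> is_cone F \<and> F \<subseteq> K \<and>
     (\<forall>x y. x \<in> F \<and> cone_ge K x y \<and> cone_ge K y 0 \<longrightarrow> y \<in> F)"

definition nontrivial_face :: "('n::finite) rvec set \<Rightarrow> 'n rvec set \<Rightarrow> bool" where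
  "nontrivial_face K F \<longleftrightarrow> is_face K F \<and> F \<noteq> {0} \<and> F \<noteq> K"

definition pi_cone :: "('n::finite) rvec set \<Rightarrow> 'n rmat set" where
  "pi_cone K = {A. \<forall>x\<in>K. A *v x \<in> K}"

definition K_irreducible :: "('n::finite) rvec set \<Rightarrow> 'n rmat \<Rightarrow> bool" where
  "K_irreducible K A \<longleftrightarrow> A \<in> pi_cone K \<and>
     \<not> (\<exists>F. nontrivial_face K F \<and> (\<forall>x\<in>F. A *v x \<in> F))"

definition P_N :: "('n::finite) rvec set \<Rightarrow> 'n rmat set set" where
  "P_N K = {M. M \<noteq> {} \<and> compact M \<and> M \<subseteq> pi_cone K \<and>
                (\<exists>A\<in>convex hull M. K_irreducible K A)}"

definition hausdorff_dist :: "('n::finite) rmat set \<Rightarrow> 'n rmat set \<Rightarrow> real" where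
  "hausdorff_dist M N = max (SUP A\<in>M. infdist A N) (SUP B\<in>N. infdist B M)"

text \<open>Compactness w.r.t. the Hausdorff metric, stated as sequential compactness
  (equivalent for metric spaces).\<close>
definition hausdorff_compact :: "('n::finite) rmat set set \<Rightarrow> bool" where
  "hausdorff_compact X \<longleftrightarrow> (\<forall>f. (\<forall>k. f k \<in> X) \<longrightarrow>
     (\<exists>l\<in>X. \<exists>r::nat\<Rightarrow>nat. strict_mono r \<and> (\<lambda>k. hausdorff_dist (f (r k)) l) \<longlonglongrightarrow> 0))"

fun prods :: "('n::finite) rmat set \<Rightarrow> nat \<Rightarrow> 'n rmat set" where
  "prods M 0 = {mat 1}"
| "prods M (Suc t) = {A ** S | A S. A \<in> M \<and> S \<in> prods M t}"

definition semigroup :: "('n::finite) rmat set \<Rightarrow> 'n rmat set" where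
  "semigroup M = (\<Union>t. prods M t)"

definition jsr :: "('n::finite) rmat set \<Rightarrow> real" where
  "jsr M = lim (\<lambda>t. (SUP S\<in>prods M t. norm S) powr (1 / real t))"

definition is_norm :: "(('n::finite) rvec \<Rightarrow> real) \<Rightarrow> bool" where
  "is_norm v \<longleftrightarrow> (\<forall>x. v x \<ge> 0) \<and> (\<forall>x. v x = 0 \<longleftrightarrow> x = 0) \<and>
     (\<forall>c x. v (c *\<^sub>R x) = \<bar>c\<bar> * v x) \<and> (\<forall>x y. v (x + y) \<le> v x + v y)"

definition K_monotone :: "('n::finite) rvec set \<Rightarrow> ('n rvec \<Rightarrow> real) \<Rightarrow> bool" where
  "K_monotone K v \<longleftrightarrow> (\<forall>x y. cone_ge K x y \<and> cone_ge K y 0 \<longrightarrow> v x \<ge> v y)"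

definition extremal :: "('n::finite) rmat set \<Rightarrow> ('n rvec \<Rightarrow> real) \<Rightarrow> bool" where
  "extremal M v \<longleftrightarrow> is_norm v \<and>
     (\<forall>x t S. S \<in> prods M t \<longrightarrow> v (S *v x) \<le> jsr M ^ t * v x)"

definition ecc :: "(('n::finite) rvec \<Rightarrow> real) \<Rightarrow> ('n rvec \<Rightarrow> real) \<Rightarrow> real" where
  "ecc N v = (SUP x\<in>{x. N x = 1}. v x) / (INF x\<in>{x. N x = 1}. v x)"

end

theory Submission
  imports Defs
begin

text \<open>
  Fix an interior point \<open>e\<close> of \<open>K\<close>. Since \<open>x \<le>\<^sub>K c e\<close> with \<open>c\<close> proportional to \<open>N x\<close>, a bound
  \<open>N (T e) \<le> B \<rho>(\<M>)\<^sup>t\<close> on the orbit of \<open>e\<close> under all products \<open>T\<close> of length \<open>t\<close> extends to all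
  vectors, and then \<open>v x = sup\<^sub>t\<^sub>,\<^sub>T N (T x) / \<rho>(\<M>)\<^sup>t\<close> is a \<open>K\<close>-monotone extremal norm
  with eccentricity bounded in terms of \<open>B\<close>. Irreducibility of some element of
  \<open>conv \<M>\<close> gives a positivity certificate: a sum \<open>Q\<close> of elements of \<open>\<M>\<close> and a power \<open>m\<close>
  with \<open>(I + Q + \<dots> + Q\<^sup>m\<^sup>-\<^sup>1) x \<ge>\<^sub>K \<delta> N(x) e\<close> on \<open>K\<close>. Expanding this sum shows that
  orbits of \<open>e\<close> can be continued with a loss of a bounded factor only, which forces
  \<open>N (T e) \<le> B \<rho>(\<M>)\<^sup>t\<close>. Certificates survive small Hausdorff perturbations, so \<open>B\<close> is
  locally uniform on \<open>P\<^sub>\<nat>\<close>, and compactness of \<open>\<X>\<close> makes it uniform.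
\<close>

section \<open>Matrices\<close>

lemma power2_norm_vec_eq_sum: "norm (v::real^'n)^2 = (\<Sum>i\<in>UNIV. (v$i)^2)"
  by (simp only: power2_norm_eq_inner) (simp add: inner_vec_def power2_eq_square)

lemma power2_norm_matrix_eq_sum: "norm (A::real^'n^'m)^2 = (\<Sum>i\<in>UNIV. norm (A$i)^2)"
  by (simp add: power2_norm_eq_inner inner_vec_def)

lemma norm_matrix_vector_mult_le:
  "norm (A *v x) \<le> norm (A::real^'n^'m) * norm (x::real^'n)"
proof -
  have "norm (A *v x)^2 = (\<Sum>i\<in>UNIV. (A$i \<bullet> x)^2)"
    by (simp add: power2_norm_vec_eq_sum matrix_vector_mul_component)
  also have "\<dots> \<le> (\<Sum>i\<in>UNIV. norm (A$i)^2 * norm x^2)"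
  proof (rule sum_mono)
    fix i
    have "\<bar>A$i \<bullet> x\<bar>^2 \<le> (norm (A$i) * norm x)^2"
      by (intro power_mono Cauchy_Schwarz_ineq2) auto
    thus "(A$i \<bullet> x)^2 \<le> norm (A$i)^2 * norm x^2" by (simp add: power_mult_distrib)
  qed
  also have "\<dots> = (norm A * norm x)^2"
    by (simp add: power2_norm_matrix_eq_sum sum_distrib_right power_mult_distrib)
  finally show ?thesis
    by (rule power2_le_imp_le) simp
qed

lemma norm_transpose: "norm (transpose (B::real^'n^'m)) = norm B"
proof -
  have "norm (transpose B)^2 = norm B^2"
    unfolding power2_norm_matrix_eq_sum power2_norm_vec_eq_sum
    by (simp add: transpose_def) (rule sum.swap)
  thus ?thesis by (simp add: power2_eq_iff_nonneg)
qed

lemma norm_matrix_mult_le: "norm (A ** B) \<le> norm (A::real^'n^'m) * norm (B::real^'k^'n)"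
proof -
  have row: "(A ** B) $ i = transpose B *v (A$i)" for i
    by (auto simp: matrix_matrix_mult_def matrix_vector_mult_def transpose_def vec_eq_iff
        mult.commute intro!: sum.cong)
  have "norm (A ** B)^2 = (\<Sum>i\<in>UNIV. norm (transpose B *v A$i)^2)"
    by (simp add: power2_norm_matrix_eq_sum row)
  also have "\<dots> \<le> (\<Sum>i\<in>UNIV. norm B^2 * norm (A$i)^2)"
  proof (rule sum_mono)
    fix i
    have "norm (transpose B *v A$i) \<le> norm B * norm (A$i)"
      using norm_matrix_vector_mult_le[of "transpose B" "A$i"] by (simp add: norm_transpose)
    hence "norm (transpose B *v A$i)^2 \<le> (norm B * norm (A$i))^2"
      by (intro power_mono) auto
    thus "norm (transpose B *v A$i)^2 \<le> norm B^2 * norm (A$i)^2" by (simp add: power_mult_distrib)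
  qed
  also have "\<dots> = norm B^2 * norm A^2"
    by (simp add: power2_norm_matrix_eq_sum sum_distrib_left)
  also have "\<dots> = (norm A * norm B)^2"
    by (simp add: power_mult_distrib)
  finally show ?thesis
    by (rule power2_le_imp_le) simp
qed

lemma matrix_vector_mult_sum_left:
  "finite S \<Longrightarrow> (sum f S) *v x = (\<Sum>i\<in>S. f i *v (x::real^'n))"
  by (induction S rule: finite_induct) (auto simp: matrix_vector_mult_add_rdistrib)

lemma matrix_vector_mult_sum_right:
  "finite S \<Longrightarrow> A *v (sum f S) = (\<Sum>i\<in>S. A *v (f i::real^'n))"
  by (induction S rule: finite_induct) (auto simp: matrix_vector_right_distrib)

lemma tendsto_matrix_mult:
  fixes f g :: "'a \<Rightarrow> real^'n^'n"
  assumes "(f \<longlongrightarrow> a) F" "(g \<longlongrightarrow> b) F"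
  shows "((\<lambda>x. f x ** g x) \<longlongrightarrow> a ** b) F"
  unfolding matrix_matrix_mult_def
  by (intro tendsto_vec_lambda tendsto_sum tendsto_mult tendsto_vec_nth assms)

fun matpow :: "('n::finite) rmat \<Rightarrow> nat \<Rightarrow> 'n rmat" where
  "matpow Q 0 = mat 1"
| "matpow Q (Suc j) = Q ** matpow Q j"

definition matpow_sum :: "('n::finite) rmat \<Rightarrow> nat \<Rightarrow> 'n rmat" where
  "matpow_sum Q m = (\<Sum>j<m. matpow Q j)"

lemma matpow_sum_Suc: "matpow_sum A (Suc m) = mat 1 + A ** matpow_sum A m"
proof (induction m)
  case 0 thus ?case by (simp add: matpow_sum_def)
next
  case (Suc m)
  have "matpow_sum A (Suc (Suc m)) = matpow_sum A (Suc m) + matpow A (Suc m)"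
    by (simp add: matpow_sum_def)
  also have "\<dots> = mat 1 + A ** (matpow_sum A m + matpow A m)"
    using Suc by (simp add: matrix_add_ldistrib)
  also have "matpow_sum A m + matpow A m = matpow_sum A (Suc m)" by (simp add: matpow_sum_def)
  finally show ?case .
qed

lemma continuous_matpow_sum: "continuous (at Q) (\<lambda>Q. matpow_sum Q m)"
proof -
  have "((\<lambda>Q. matpow Q j) \<longlongrightarrow> matpow Q j) (at Q)" for j
    by (induction j) (simp_all add: tendsto_matrix_mult tendsto_ident_at)
  thus ?thesis unfolding continuous_at matpow_sum_def by (intro tendsto_sum)
qed

section \<open>Submultiplicative sequences\<close>

lemma submultiplicative_le_geometric:
  fixes g :: "nat \<Rightarrow> real"
  assumes g0: "\<And>t. g t \<ge> 0" and sub: "\<And>s t. g (s + t) \<le> g s * g t"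
    and t0: "t0 \<ge> 1" and p: "p > 0" and gt0: "g t0 \<le> p ^ t0"
  shows "\<exists>G>0. \<forall>t. g t \<le> G * p ^ t"
proof -
  define G where "G = 1 + (\<Sum>r<t0. g r / p ^ r)"
  have Gpos: "G > 0" unfolding G_def using g0 p by (auto intro!: add_pos_nonneg sum_nonneg)
  have "g t \<le> G * p ^ t" for t
  proof (induction t rule: less_induct)
    case (less t)
    show ?case
    proof (cases "t < t0")
      case True
      have "g t / p ^ t \<le> (\<Sum>r<t0. g r / p ^ r)"
        using True g0 p by (intro member_le_sum) auto
      hence "g t / p ^ t \<le> G" unfolding G_def by linarith
      thus ?thesis using p by (simp add: divide_le_eq)
    next
      case False
      hence "g t \<le> g t0 * g (t - t0)" using sub by (metis le_add_diff_inverse not_less)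
      also have "\<dots> \<le> p ^ t0 * (G * p ^ (t - t0))"
        using less.IH[of "t - t0"] t0 False gt0 g0 p by (intro mult_mono) auto
      also have "\<dots> = G * p ^ t" using False by (simp add: power_add[symmetric] algebra_simps)
      finally show ?thesis .
    qed
  qed
  thus ?thesis using Gpos by blast
qed

lemma submultiplicative_root_eventually_less:
  fixes g :: "nat \<Rightarrow> real"
  assumes g0: "\<And>t. g t \<ge> 0" and sub: "\<And>s t. g (s + t) \<le> g s * g t"
    and t0: "t0 \<ge> 1" and a: "g t0 powr (1 / real t0) < a"
  shows "eventually (\<lambda>t. g t powr (1 / real t) < a) sequentially"
proof -
  define r where "r = g t0 powr (1 / real t0)"
  define p where "p = (r + a) / 2"
  have "r \<ge> 0" unfolding r_def by simp
  hence p0: "p > 0" and pa: "p < a" and rp: "r < p" using a unfolding p_def r_def[symmetric] by auto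
  have "g t0 = r powr (real t0)" using t0 g0[of t0] unfolding r_def by (simp add: powr_powr)
  also have "\<dots> < p powr (real t0)" using t0 rp \<open>r \<ge> 0\<close> by (intro powr_less_mono2) auto
  finally obtain G where G: "G > 0" "\<And>t. g t \<le> G * p ^ t"
    using submultiplicative_le_geometric[OF g0 sub t0 p0] p0 by (auto simp: powr_realpow)
  have lim: "(\<lambda>t. G powr (1 / real t) * p) \<longlonglongrightarrow> G powr 0 * p"
    by (intro tendsto_intros tendsto_powr lim_1_over_n) (use G in auto)
  have "eventually (\<lambda>t. G powr (1 / real t) * p < a) sequentially"
    by (rule order_tendstoD(2)[OF lim]) (use G pa in simp)
  moreover have "eventually (\<lambda>t. t \<ge> 1) sequentially" by (rule eventually_ge_at_top)
  ultimately show ?thesis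
  proof eventually_elim
    case (elim t)
    have "g t powr (1 / real t) \<le> (G * p ^ t) powr (1 / real t)"
      using G(2)[of t] g0[of t] by (intro powr_mono2) auto
    also have "\<dots> = G powr (1 / real t) * p"
      using G p0 elim by (simp add: powr_mult powr_realpow[symmetric] powr_powr)
    finally show ?case using elim by simp
  qed
qed

lemma submultiplicative_root_tendsto_Inf:
  fixes g :: "nat \<Rightarrow> real"
  assumes g0: "\<And>t. g t \<ge> 0" and sub: "\<And>s t. g (s + t) \<le> g s * g t"
  shows "(\<lambda>t. g t powr (1 / real t)) \<longlonglongrightarrow> Inf ((\<lambda>t. g t powr (1 / real t)) ` {1..})"
proof -
  define h where "h t = g t powr (1 / real t)" for t
  define L where "L = Inf (h ` {1..})"
  have bdd: "bdd_below (h ` {1..})" unfolding h_def by (intro bdd_belowI[of _ 0]) auto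
  have "eventually (\<lambda>t. h t < a) sequentially" if "a > L" for a
  proof -
    have "Inf (h ` {1..}) < a" using that unfolding L_def .
    then obtain t0 where "t0 \<ge> 1" "h t0 < a" using cInf_less_iff[of "h ` {1..}" a] bdd by auto
    thus ?thesis unfolding h_def by (intro submultiplicative_root_eventually_less[OF g0 sub])
  qed
  moreover have "eventually (\<lambda>t. a < h t) sequentially" if "a < L" for a
    using eventually_ge_at_top[of 1]
    by eventually_elim (use bdd that in \<open>auto simp: L_def intro: less_le_trans cInf_lower\<close>)
  ultimately have "h \<longlonglongrightarrow> L" by (intro order_tendstoI)
  thus ?thesis unfolding h_def L_def .
qed

lemma pow_le_const_times_pow_imp_le:
  fixes y z c :: real
  assumes z: "z > 0" and y: "y \<ge> 0" and ev: "\<And>k. k \<ge> k0 \<Longrightarrow> y ^ k \<le> c * z ^ k"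
  shows "y \<le> z"
proof (rule ccontr)
  assume "\<not> y \<le> z"
  hence yz: "y / z > 1" using z by simp
  obtain n where n: "c < (y / z) ^ n" using real_arch_pow[OF yz] by blast
  have "(y / z) ^ n \<le> (y / z) ^ (n + k0)" using yz by (intro power_increasing) auto
  moreover have "y ^ (n + k0) \<le> c * z ^ (n + k0)" using ev by simp
  hence "(y / z) ^ (n + k0) \<le> c" using z by (simp add: power_divide divide_le_eq)
  ultimately show False using n by simp
qed

lemma power_le_power_max:
  fixes q :: real
  assumes q: "q > 0" and lower: "k * t0 \<le> \<tau>" and upper: "\<tau> \<le> k * (t0 + m)"
  shows "q ^ \<tau> \<le> (q ^ t0 * max 1 (q ^ m)) ^ k"
proof (cases "q \<ge> 1")
  case True
  have "q ^ \<tau> \<le> q ^ (k * (t0 + m))" using True upper by (intro power_increasing)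
  thus ?thesis using True by (simp add: mult.commute[of k] power_mult power_add power_mult_distrib)
next
  case False
  have "q ^ \<tau> \<le> q ^ (k * t0)" using False q lower by (intro power_decreasing) auto
  also have "\<dots> \<le> (q ^ t0 * max 1 (q ^ m)) ^ k" using q
    by (simp add: mult.commute[of k] power_mult power_mono)
  finally show ?thesis .
qed

section \<open>Products and the joint spectral radius\<close>

lemma prods_mult: "P \<in> prods M a \<Longrightarrow> Q \<in> prods M b \<Longrightarrow> P ** Q \<in> prods M (a + b)"
proof (induction a arbitrary: P)
  case 0 thus ?case by simp
next
  case (Suc a)
  then obtain A S where A: "A \<in> M" "S \<in> prods M a" "P = A ** S" by auto
  hence "S ** Q \<in> prods M (a + b)" using Suc by blast
  thus ?case using A by (auto simp: matrix_mul_assoc[symmetric])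
qed

lemma prods_add_split:
  "S \<in> prods M (a + b) \<Longrightarrow> \<exists>P\<in>prods M a. \<exists>Q\<in>prods M b. S = P ** Q"
proof (induction a arbitrary: S)
  case 0 thus ?case by force
next
  case (Suc a)
  then obtain A S' where A: "A \<in> M" "S' \<in> prods M (a + b)" "S = A ** S'" by auto
  then obtain P Q where PQ: "P \<in> prods M a" "Q \<in> prods M b" "S' = P ** Q"
    using Suc.IH by blast
  have "A ** P \<in> prods M (Suc a)" using A PQ by auto
  moreover have "S = (A ** P) ** Q" using A PQ by (simp add: matrix_mul_assoc)
  ultimately show ?case using PQ by blast
qed

lemma prods_nonempty: "M \<noteq> {} \<Longrightarrow> prods M t \<noteq> {}"
  by (induction t) auto

lemma prods_one [simp]: "prods M 1 = M"
  by auto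

lemma norm_prods_le:
  fixes M :: "('n::finite) rmat set"
  assumes "\<And>A. A \<in> M \<Longrightarrow> norm A \<le> R" "S \<in> prods M t"
  shows "norm S \<le> norm (mat 1 :: 'n rmat) * R ^ t"
  using assms(2)
proof (induction t arbitrary: S)
  case 0 thus ?case by simp
next
  case (Suc t)
  then obtain A S' where A: "A \<in> M" "S' \<in> prods M t" "S = A ** S'" by auto
  have R0: "R \<ge> 0" using assms(1)[OF A(1)] norm_ge_zero order_trans by blast
  have "norm S \<le> norm A * norm S'" using A norm_matrix_mult_le by blast
  also have "\<dots> \<le> R * (norm (mat 1 :: 'n rmat) * R ^ t)"
    using assms(1)[OF A(1)] Suc.IH[OF A(2)] R0 by (intro mult_mono) auto
  finally show ?case by (simp add: algebra_simps)
qed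

lemma pi_cone_mult: "A \<in> pi_cone K \<Longrightarrow> B \<in> pi_cone K \<Longrightarrow> A ** B \<in> pi_cone K"
  by (simp add: pi_cone_def matrix_vector_mul_assoc[symmetric])

lemma prods_in_pi_cone: "M \<subseteq> pi_cone K \<Longrightarrow> S \<in> prods M t \<Longrightarrow> S \<in> pi_cone K"
  by (induction t arbitrary: S) (auto simp: pi_cone_def[of K, symmetric] intro!: pi_cone_mult,
      simp add: pi_cone_def)

definition prods_norm_sup :: "('n::finite) rmat set \<Rightarrow> nat \<Rightarrow> real" where
  "prods_norm_sup M t = (SUP S\<in>prods M t. norm S)"

locale bounded_matrix_set =
  fixes M :: "('n::finite) rmat set" and R :: real
  assumes nonempty: "M \<noteq> {}" and norm_bound: "\<And>A. A \<in> M \<Longrightarrow> norm A \<le> R"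
begin

lemma norm_le_prods_norm_sup: "S \<in> prods M t \<Longrightarrow> norm S \<le> prods_norm_sup M t"
  unfolding prods_norm_sup_def using norm_prods_le[OF norm_bound]
  by (intro cSUP_upper bdd_aboveI2) auto

lemma prods_norm_sup_nonneg: "prods_norm_sup M t \<ge> 0"
proof -
  obtain S where "S \<in> prods M t" using prods_nonempty[OF nonempty] by blast
  thus ?thesis using norm_le_prods_norm_sup[of S t] norm_ge_zero order_trans by blast
qed

lemma prods_norm_sup_submult: "prods_norm_sup M (s + t) \<le> prods_norm_sup M s * prods_norm_sup M t"
  unfolding prods_norm_sup_def[of M "s+t"]
proof (rule cSUP_least)
  show "prods M (s + t) \<noteq> {}" using prods_nonempty[OF nonempty] .
  fix S assume "S \<in> prods M (s + t)"
  then obtain P Q where PQ: "P \<in> prods M s" "Q \<in> prods M t" "S = P ** Q"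
    using prods_add_split by blast
  have "norm S \<le> norm P * norm Q" using PQ norm_matrix_mult_le by blast
  also have "\<dots> \<le> prods_norm_sup M s * prods_norm_sup M t"
    using PQ norm_le_prods_norm_sup by (intro mult_mono) (auto simp: prods_norm_sup_nonneg)
  finally show "norm S \<le> prods_norm_sup M s * prods_norm_sup M t" .
qed

lemma jsr_tendsto: "(\<lambda>t. prods_norm_sup M t powr (1 / real t)) \<longlonglongrightarrow> jsr M"
  and jsr_eq_Inf: "jsr M = Inf ((\<lambda>t. prods_norm_sup M t powr (1 / real t)) ` {1..})"
proof -
  have "(\<lambda>t. prods_norm_sup M t powr (1 / real t))
          \<longlonglongrightarrow> Inf ((\<lambda>t. prods_norm_sup M t powr (1 / real t)) ` {1..})"
    by (rule submultiplicative_root_tendsto_Inf)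
      (auto simp: prods_norm_sup_nonneg prods_norm_sup_submult)
  moreover from this show "jsr M = Inf ((\<lambda>t. prods_norm_sup M t powr (1 / real t)) ` {1..})"
    unfolding jsr_def prods_norm_sup_def[symmetric] by (rule limI)
  ultimately show "(\<lambda>t. prods_norm_sup M t powr (1 / real t)) \<longlonglongrightarrow> jsr M" by simp
qed

lemma jsr_nonneg: "jsr M \<ge> 0"
  unfolding jsr_eq_Inf by (rule cInf_greatest) auto

lemma jsr_le: "jsr M \<le> R"
proof -
  have "jsr M \<le> prods_norm_sup M 1 powr (1 / real 1)" unfolding jsr_eq_Inf
    by (rule cInf_lower[OF imageI]) (auto intro!: bdd_belowI[of _ 0])
  also have "\<dots> = prods_norm_sup M 1" using prods_norm_sup_nonneg by simp
  also have "\<dots> \<le> R" unfolding prods_norm_sup_def prods_one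
    using nonempty norm_bound by (intro cSUP_least) auto
  finally show ?thesis .
qed

lemma eventually_norm_prods_le:
  assumes "q > jsr M"
  shows "\<exists>t0. \<forall>t\<ge>t0. \<forall>S\<in>prods M t. norm S \<le> q ^ t"
proof -
  have q0: "q > 0" using assms jsr_nonneg by linarith
  have "eventually (\<lambda>t. prods_norm_sup M t powr (1 / real t) < q) sequentially"
    using order_tendstoD(2)[OF jsr_tendsto assms] .
  moreover have "eventually (\<lambda>t. t \<ge> 1) sequentially" by (rule eventually_ge_at_top)
  ultimately have "eventually (\<lambda>t. \<forall>S\<in>prods M t. norm S \<le> q ^ t) sequentially"
  proof eventually_elim
    case (elim t)
    have "prods_norm_sup M t = (prods_norm_sup M t powr (1 / real t)) powr (real t)"
      using elim prods_norm_sup_nonneg[of t] by (simp add: powr_powr)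
    also have "\<dots> \<le> q powr (real t)" using elim by (intro powr_mono2) auto
    also have "\<dots> = q ^ t" using q0 by (simp add: powr_realpow)
    finally show ?case using norm_le_prods_norm_sup order_trans by blast
  qed
  thus ?thesis unfolding eventually_sequentially by blast
qed

end

lemma compact_bounded_matrix_set:
  "compact M \<Longrightarrow> M \<noteq> {} \<Longrightarrow> \<exists>R. bounded_matrix_set M R"
  unfolding bounded_matrix_set_def by (metis compact_imp_bounded bounded_iff)

section \<open>Proper cones and monotone norms\<close>

locale cone_order =
  fixes K :: "('n::finite) rvec set"
  assumes proper: "proper_cone K"
begin

lemma zero_in_cone: "0 \<in> K"
  using proper unfolding proper_cone_def by (metis Int_iff singletonI)

lemma closed_cone: "closed K"
  using proper unfolding proper_cone_def by auto

lemma interior_cone_nonempty: "interior K \<noteq> {}"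
  using proper unfolding proper_cone_def by auto

lemma cone_scaleR: "x \<in> K \<Longrightarrow> r \<ge> 0 \<Longrightarrow> r *\<^sub>R x \<in> K"
  using proper zero_in_cone unfolding proper_cone_def is_cone_def
  by (cases "r = 0") auto

lemma cone_add: "x \<in> K \<Longrightarrow> y \<in> K \<Longrightarrow> x + y \<in> K"
proof -
  assume "x \<in> K" "y \<in> K"
  hence "(1/2::real) *\<^sub>R x + (1/2::real) *\<^sub>R y \<in> K"
    using proper unfolding proper_cone_def convex_def by auto
  hence "2 *\<^sub>R ((1/2::real) *\<^sub>R x + (1/2::real) *\<^sub>R y) \<in> K" by (rule cone_scaleR) simp
  thus ?thesis by (simp add: scaleR_add_right)
qed

lemma cone_diff_trans: "x - y \<in> K \<Longrightarrow> y - z \<in> K \<Longrightarrow> x - z \<in> K"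
  using cone_add[of "x - y" "y - z"] by simp

lemma cone_pointed: "x \<in> K \<Longrightarrow> -x \<in> K \<Longrightarrow> x = 0"
proof -
  assume "x \<in> K" "-x \<in> K"
  hence "x \<in> K \<inter> uminus ` K" by (metis IntI minus_minus rev_image_eqI)
  thus ?thesis using proper unfolding proper_cone_def by auto
qed

lemma cone_sum: "finite A \<Longrightarrow> (\<And>i. i \<in> A \<Longrightarrow> f i \<in> K) \<Longrightarrow> sum f A \<in> K"
  by (induction A rule: finite_induct) (auto simp: zero_in_cone cone_add)

lemma pi_cone_apply: "A \<in> pi_cone K \<Longrightarrow> x \<in> K \<Longrightarrow> A *v x \<in> K"
  by (simp add: pi_cone_def)

lemma pi_cone_apply_diff: "A \<in> pi_cone K \<Longrightarrow> x - y \<in> K \<Longrightarrow> A *v x - A *v y \<in> K"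
  by (simp add: pi_cone_def matrix_vector_mult_diff_distrib[symmetric])

lemma sum_in_pi_cone:
  "finite G \<Longrightarrow> (\<And>B. B \<in> G \<Longrightarrow> g B \<in> pi_cone K) \<Longrightarrow> (\<Sum>B\<in>G. g B) \<in> pi_cone K"
  unfolding pi_cone_def by (auto simp: matrix_vector_mult_sum_left intro!: cone_sum)

lemma matpow_apply: "A \<in> pi_cone K \<Longrightarrow> x \<in> K \<Longrightarrow> matpow A j *v x \<in> K"
  by (induction j) (auto simp: pi_cone_apply matrix_vector_mul_assoc[symmetric])

lemma matpow_sum_apply: "A \<in> pi_cone K \<Longrightarrow> x \<in> K \<Longrightarrow> matpow_sum A m *v x \<in> K"
  unfolding matpow_sum_def by (simp add: matrix_vector_mult_sum_left cone_sum matpow_apply)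

lemma matpow_sum_mono:
  assumes "A \<in> pi_cone K" "x \<in> K" "m1 \<le> m2"
  shows "matpow_sum A m2 *v x - matpow_sum A m1 *v x \<in> K"
proof -
  have "matpow_sum A m2 *v x - matpow_sum A m1 *v x = (\<Sum>j\<in>{m1..<m2}. matpow A j *v x)"
    using assms(3) unfolding matpow_sum_def matrix_vector_mult_sum_left[OF finite_lessThan]
    by (simp add: sum_diff_nat_ivl lessThan_atLeast0)
  thus ?thesis using assms by (simp add: cone_sum matpow_apply)
qed

lemma matpow_sum_dominates:
  assumes A: "A \<in> pi_cone K" and Q: "Q \<in> pi_cone K"
    and QA: "\<And>z. z \<in> K \<Longrightarrow> Q *v z - A *v z \<in> K" and x: "x \<in> K"
  shows "matpow_sum Q m *v x - matpow_sum A m *v x \<in> K"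
proof -
  have "matpow Q j *v x - matpow A j *v x \<in> K" for j
  proof (induction j)
    case 0 thus ?case using zero_in_cone by simp
  next
    case (Suc j)
    have "(Q *v (matpow Q j *v x) - A *v (matpow Q j *v x))
          + A *v (matpow Q j *v x - matpow A j *v x) \<in> K"
      using cone_add QA[OF matpow_apply[OF Q x]] pi_cone_apply[OF A Suc] by blast
    thus ?case by (simp add: matrix_vector_mult_diff_distrib matrix_vector_mul_assoc)
  qed
  moreover have "matpow_sum Q m *v x - matpow_sum A m *v x
      = (\<Sum>j<m. matpow Q j *v x - matpow A j *v x)"
    unfolding matpow_sum_def by (simp add: matrix_vector_mult_sum_left sum_subtractf)
  ultimately show ?thesis by (simp add: cone_sum)
qed

lemma matpow_sum_domination_mono:
  assumes A: "A \<in> pi_cone K" and x: "x \<in> K" and c: "0 \<le> c" "c \<le> C" and m: "m \<le> m'"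
    and dom: "c *\<^sub>R (matpow_sum A m *v x) - y \<in> K"
  shows "C *\<^sub>R (matpow_sum A m' *v x) - y \<in> K"
proof -
  have "(C - c) *\<^sub>R (matpow_sum A m' *v x) \<in> K"
    using matpow_sum_apply[OF A x] c by (intro cone_scaleR) auto
  moreover have "c *\<^sub>R (matpow_sum A m' *v x - matpow_sum A m *v x) \<in> K"
    using matpow_sum_mono[OF A x m] c by (intro cone_scaleR)
  ultimately have "(C - c) *\<^sub>R (matpow_sum A m' *v x)
        + c *\<^sub>R (matpow_sum A m' *v x - matpow_sum A m *v x)
        + (c *\<^sub>R (matpow_sum A m *v x) - y) \<in> K"
    using dom cone_add by blast
  thus ?thesis by (simp add: algebra_simps)
qed

section \<open>Irreducibility\<close>

definition orbit_ideal :: "'n rmat \<Rightarrow> 'n rvec \<Rightarrow> 'n rvec set" where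
  "orbit_ideal A x = {y \<in> K. \<exists>c\<ge>0. \<exists>m. c *\<^sub>R (matpow_sum A m *v x) - y \<in> K}"

lemma is_face_orbit_ideal: "is_face K (orbit_ideal A x)"
  unfolding is_face_def is_cone_def
proof (intro conjI allI impI ballI)
  have "(0::real) *\<^sub>R (matpow_sum A 0 *v x) - 0 \<in> K" using zero_in_cone by simp
  thus "orbit_ideal A x \<noteq> {}" unfolding orbit_ideal_def using zero_in_cone by blast
  show "orbit_ideal A x \<subseteq> K" unfolding orbit_ideal_def by auto
next
  fix r :: real and y assume r: "r > 0" and "y \<in> orbit_ideal A x"
  then obtain c m where c: "y \<in> K" "c \<ge> 0" "c *\<^sub>R (matpow_sum A m *v x) - y \<in> K"
    unfolding orbit_ideal_def by auto
  have "r *\<^sub>R (c *\<^sub>R (matpow_sum A m *v x) - y) \<in> K" using c r by (intro cone_scaleR) auto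
  hence "(r * c) *\<^sub>R (matpow_sum A m *v x) - r *\<^sub>R y \<in> K" by (simp add: algebra_simps)
  thus "r *\<^sub>R y \<in> orbit_ideal A x" unfolding orbit_ideal_def using c r cone_scaleR
    by (auto intro!: exI[of _ "r * c"])
next
  fix y z assume yz: "y \<in> orbit_ideal A x \<and> cone_ge K y z \<and> cone_ge K z 0"
  then obtain c m where c: "c \<ge> 0" "c *\<^sub>R (matpow_sum A m *v x) - y \<in> K"
    unfolding orbit_ideal_def by auto
  hence "c *\<^sub>R (matpow_sum A m *v x) - z \<in> K" using yz cone_diff_trans unfolding cone_ge_def by blast
  thus "z \<in> orbit_ideal A x" using yz c unfolding orbit_ideal_def cone_ge_def by auto
qed

lemma orbit_ideal_invariant:
  assumes A: "A \<in> pi_cone K" and x: "x \<in> K" and y: "y \<in> orbit_ideal A x"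
  shows "A *v y \<in> orbit_ideal A x"
proof -
  obtain c m where c: "y \<in> K" "c \<ge> 0" "c *\<^sub>R (matpow_sum A m *v x) - y \<in> K"
    using y unfolding orbit_ideal_def by auto
  have "c *\<^sub>R x + A *v (c *\<^sub>R (matpow_sum A m *v x) - y) \<in> K"
    using cone_add cone_scaleR pi_cone_apply[OF A c(3)] x c by blast
  moreover have "c *\<^sub>R x + A *v (c *\<^sub>R (matpow_sum A m *v x) - y)
                  = c *\<^sub>R (matpow_sum A (Suc m) *v x) - A *v y"
    by (simp add: matpow_sum_Suc matrix_vector_mult_add_rdistrib matrix_vector_mult_diff_distrib
        matrix_vector_mult_scaleR matrix_vector_mul_assoc algebra_simps)
  ultimately show ?thesis unfolding orbit_ideal_def using pi_cone_apply[OF A c(1)] c(2) by auto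
qed

lemma irreducible_orbit_ideal:
  assumes irr: "K_irreducible K A" and x: "x \<in> K" "x \<noteq> 0"
  shows "orbit_ideal A x = K"
proof -
  have A: "A \<in> pi_cone K" using irr unfolding K_irreducible_def by auto
  have "x \<in> orbit_ideal A x" unfolding orbit_ideal_def using x
    by (auto intro!: exI[of _ 1] exI[of _ 1] simp: matpow_sum_def zero_in_cone)
  thus ?thesis using irr x(2) is_face_orbit_ideal orbit_ideal_invariant[OF A x(1)]
    unfolding K_irreducible_def nontrivial_face_def by blast
qed

end

locale vec_norm =
  fixes N :: "('n::finite) rvec \<Rightarrow> real"
  assumes norm: "is_norm N"
begin

lemma N_nonneg: "N x \<ge> 0" using norm unfolding is_norm_def by auto
lemma N_eq_0_iff: "N x = 0 \<longleftrightarrow> x = 0" using norm unfolding is_norm_def by auto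
lemma N_0 [simp]: "N 0 = 0" using N_eq_0_iff by auto
lemma N_scaleR: "N (c *\<^sub>R x) = \<bar>c\<bar> * N x" using norm unfolding is_norm_def by auto
lemma N_triangle: "N (x + y) \<le> N x + N y" using norm unfolding is_norm_def by auto
lemma N_minus: "N (- x) = N x" using N_scaleR[of "-1" x] by simp
lemma N_triangle_diff: "N (x - y) \<le> N x + N y" using N_triangle[of x "-y"] N_minus[of y] by simp

lemma N_pos: "x \<noteq> 0 \<Longrightarrow> N x > 0"
  using N_eq_0_iff[of x] N_nonneg[of x] by linarith

lemma abs_N_diff_le: "\<bar>N x - N y\<bar> \<le> N (x - y)"
  using N_triangle[of "x - y" y] N_triangle[of "y - x" x] N_minus[of "x - y"]
  by (simp add: abs_le_iff)

lemma N_sum_le: "finite A \<Longrightarrow> N (sum f A) \<le> (\<Sum>i\<in>A. N (f i))"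
  by (induction A rule: finite_induct) (auto intro: order_trans[OF N_triangle])

lemma N_le_norm: "\<exists>\<beta>>0. \<forall>x. N x \<le> \<beta> * norm x"
proof -
  define \<beta> where "\<beta> = 1 + (\<Sum>i\<in>(UNIV::'n set). N (axis i 1))"
  have "N x \<le> \<beta> * norm x" for x
  proof -
    have "N x \<le> (\<Sum>i\<in>UNIV. N (x$i *\<^sub>R axis i 1))"
      using N_sum_le[of UNIV "\<lambda>i. x$i *\<^sub>R axis i 1"] basis_expansion[of x]
      by (simp add: scalar_mult_eq_scaleR)
    also have "\<dots> = (\<Sum>i\<in>UNIV. \<bar>x$i\<bar> * N (axis i 1))" by (simp add: N_scaleR)
    also have "\<dots> \<le> (\<Sum>i\<in>UNIV. norm x * N (axis i 1))"
      by (rule sum_mono, rule mult_right_mono) (auto simp: component_le_norm_cart N_nonneg)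
    also have "\<dots> \<le> \<beta> * norm x" unfolding \<beta>_def by (simp add: sum_distrib_left algebra_simps)
    finally show ?thesis .
  qed
  moreover have "\<beta> > 0" unfolding \<beta>_def using N_nonneg by (simp add: sum_nonneg add_pos_nonneg)
  ultimately show ?thesis by blast
qed

lemma continuous_on_N: "continuous_on A N"
proof -
  obtain \<beta> where \<beta>: "\<beta> > 0" "\<And>x. N x \<le> \<beta> * norm x" using N_le_norm by blast
  have "dist (N x) (N y) \<le> \<beta> * dist x y" for x y
    using abs_N_diff_le[of x y] \<beta>(2)[of "x - y"] by (simp add: dist_real_def dist_norm)
  thus ?thesis unfolding continuous_on_iff using \<beta>(1)
    by (metis divide_pos_pos less_divide_eq mult.commute order_le_less_trans)
qed

lemma norm_le_N: "\<exists>\<alpha>>0. \<forall>x. \<alpha> * norm x \<le> N x"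
proof -
  obtain x0 where x0: "x0 \<in> sphere 0 1" "\<And>y. y \<in> sphere 0 1 \<Longrightarrow> N x0 \<le> N y"
    using continuous_attains_inf[OF compact_sphere _ continuous_on_N, of "0::'n rvec" 1]
    by (auto simp: sphere_eq_empty)
  have "N x0 * norm x \<le> N x" for x
  proof (cases "x = 0")
    case False
    have "N x0 \<le> N ((1 / norm x) *\<^sub>R x)" using False by (intro x0(2)) simp
    thus ?thesis using False by (simp add: N_scaleR field_simps)
  qed simp
  moreover have "N x0 > 0" using x0(1) by (intro N_pos) auto
  ultimately show ?thesis by blast
qed

lemma ecc_le:
  assumes lower: "\<And>x. N x \<le> v x" and upper: "\<And>x. v x \<le> c * N x"
  shows "ecc N v \<le> c"
proof -
  let ?S = "{x. N x = 1}"
  obtain i :: 'n where True by simp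
  have "N ((1 / N (axis i 1)) *\<^sub>R axis i (1::real)) = 1"
    using N_pos[of "axis i 1"] by (simp add: N_scaleR axis_eq_0_iff)
  then obtain x1 where x1: "x1 \<in> ?S" by blast
  have bounds: "1 \<le> v x" "v x \<le> c" if "x \<in> ?S" for x
    using lower[of x] upper[of x] that by auto
  have sup_le: "(SUP x\<in>?S. v x) \<le> c" by (rule cSUP_least) (use x1 bounds in auto)
  have inf_ge: "(INF x\<in>?S. v x) \<ge> 1" by (rule cINF_greatest) (use x1 bounds in auto)
  have "bdd_above (v ` ?S)" using bounds by (intro bdd_aboveI2[of _ _ c])
  hence "v x1 \<le> (SUP x\<in>?S. v x)" using x1 by (intro cSUP_upper)
  hence sup_nonneg: "(SUP x\<in>?S. v x) \<ge> 0" using lower[of x1] N_nonneg[of x1] by linarith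
  have "ecc N v \<le> (SUP x\<in>?S. v x)"
    unfolding ecc_def using inf_ge sup_nonneg by (simp add: divide_le_eq mult_le_cancel_left1)
  thus ?thesis using sup_le by linarith
qed

end

locale monotone_norm = cone_order K + vec_norm N
  for K :: "('n::finite) rvec set" and N :: "'n rvec \<Rightarrow> real" +
  assumes monotone: "K_monotone K N"
begin

lemma N_mono: "x - y \<in> K \<Longrightarrow> y \<in> K \<Longrightarrow> N y \<le> N x"
  using monotone unfolding K_monotone_def cone_ge_def by auto

lemma compact_unit_slice: "compact {x\<in>K. N x = 1}"
proof -
  obtain \<alpha> where \<alpha>: "\<alpha> > 0" "\<And>x. \<alpha> * norm x \<le> N x" using norm_le_N by blast
  have "norm x \<le> 1 / \<alpha>" if "N x = 1" for x using \<alpha>(2)[of x] \<alpha>(1) that by (simp add: field_simps)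
  hence "bounded {x\<in>K. N x = 1}" unfolding bounded_iff by blast
  moreover have "closed {x\<in>K. N x = 1}"
    using closed_cone closed_Collect_eq[OF continuous_on_N continuous_on_const]
    by (simp add: Collect_conj_eq closed_Int)
  ultimately show ?thesis by (simp add: compact_eq_bounded_closed)
qed

end

locale interior_frame = monotone_norm K N
  for K :: "('n::finite) rvec set" and N :: "'n rvec \<Rightarrow> real" +
  fixes e :: "'n rvec" and r0 \<alpha> \<beta> :: real
  assumes r0: "r0 > 0" and cball_in_cone: "cball e r0 \<subseteq> K"
    and alpha: "\<alpha> > 0" "\<And>x. \<alpha> * norm x \<le> N x"
    and beta: "\<beta> > 0" "\<And>x. N x \<le> \<beta> * norm x"
begin

lemma e_in_cone: "e \<in> K" using cball_in_cone r0 by auto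

lemma e_dominates:
  "(norm y / r0) *\<^sub>R e - y \<in> K \<and> (norm y / r0) *\<^sub>R e + y \<in> K"
proof (cases "y = 0")
  case True thus ?thesis using zero_in_cone by simp
next
  case False
  let ?z = "(r0 / norm y) *\<^sub>R y"
  have "e - ?z \<in> K" "e + ?z \<in> K" using cball_in_cone False r0 by (auto simp: dist_norm)
  hence "(norm y / r0) *\<^sub>R (e - ?z) \<in> K" "(norm y / r0) *\<^sub>R (e + ?z) \<in> K"
    using r0 by (auto intro!: cone_scaleR)
  thus ?thesis using False r0 by (simp add: algebra_simps)
qed

lemma e_dominates_N:
  "(N y / (\<alpha> * r0)) *\<^sub>R e - y \<in> K \<and> (N y / (\<alpha> * r0)) *\<^sub>R e + y \<in> K"
proof -
  define a where "a = norm y / r0"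
  define b where "b = N y / (\<alpha> * r0)"
  have "a = (\<alpha> * norm y) / (\<alpha> * r0)" unfolding a_def using alpha(1) by simp
  also have "\<dots> \<le> b" unfolding b_def using alpha r0 by (intro divide_right_mono) auto
  finally have "(b - a) *\<^sub>R e \<in> K" using e_in_cone by (intro cone_scaleR) auto
  hence "(b - a) *\<^sub>R e + (a *\<^sub>R e - y) \<in> K" "(b - a) *\<^sub>R e + (a *\<^sub>R e + y) \<in> K"
    using e_dominates[of y] cone_add unfolding a_def by blast+
  thus ?thesis unfolding b_def[symmetric] by (simp add: algebra_simps)
qed

lemma e_nonzero: "e \<noteq> 0"
proof
  assume e0: "e = 0"
  obtain i :: 'n where True by simp
  let ?z = "r0 *\<^sub>R (axis i 1 :: 'n rvec)"
  have "?z \<in> K" "-?z \<in> K" using cball_in_cone e0 r0 by (auto simp: dist_norm)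
  hence "?z = 0" by (rule cone_pointed)
  thus False using r0 by (simp add: axis_eq_0_iff)
qed

lemma add_e_in_interior: "z \<in> K \<Longrightarrow> z + e \<in> interior K"
proof -
  assume z: "z \<in> K"
  have "ball (z + e) r0 \<subseteq> K"
  proof
    fix w assume "w \<in> ball (z + e) r0"
    hence "w - z \<in> K" using cball_in_cone by (auto simp: dist_norm algebra_simps)
    thus "w \<in> K" using cone_add[OF z] by force
  qed
  thus ?thesis using r0 by (meson centre_in_ball interior_maximal open_ball subsetD)
qed

lemma N_matrix_e_le: "N (A *v e) \<le> \<beta> * norm e * norm A"
proof -
  have "N (A *v e) \<le> \<beta> * norm (A *v e)" by (rule beta)
  also have "\<dots> \<le> \<beta> * (norm A * norm e)"
    using beta(1) norm_matrix_vector_mult_le by (intro mult_left_mono) auto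
  finally show ?thesis by (simp add: algebra_simps)
qed

text \<open>Dominating \<open>2 e\<close> rather than \<open>e\<close> leaves room for an open neighbourhood of \<open>x\<close>.\<close>

lemma irreducible_local_domination:
  assumes irr: "K_irreducible K A" and x: "x \<in> K" "x \<noteq> 0"
  shows "\<exists>c\<ge>0. \<exists>m U. open U \<and> x \<in> U \<and> (\<forall>x'\<in>U. c *\<^sub>R (matpow_sum A m *v x') - e \<in> K)"
proof -
  have "2 *\<^sub>R e \<in> K" using cone_scaleR[OF e_in_cone, of 2] by simp
  then obtain c m where c: "c \<ge> 0" "c *\<^sub>R (matpow_sum A m *v x) - 2 *\<^sub>R e \<in> K"
    using irreducible_orbit_ideal[OF irr x] unfolding orbit_ideal_def by blast
  define U where "U = (\<lambda>x'. c *\<^sub>R (matpow_sum A m *v x') - e) -` interior K"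
  have "open U" unfolding U_def by (intro open_vimage) (auto intro!: continuous_intros)
  moreover have "c *\<^sub>R (matpow_sum A m *v x) - 2 *\<^sub>R e + e \<in> interior K"
    using c(2) by (rule add_e_in_interior)
  hence "x \<in> U" unfolding U_def by (simp add: algebra_simps scaleR_2)
  moreover have "\<forall>x'\<in>U. c *\<^sub>R (matpow_sum A m *v x') - e \<in> K"
    unfolding U_def using interior_subset by blast
  ultimately show ?thesis using c(1) by blast
qed

lemma irreducible_unit_slice_domination:
  assumes irr: "K_irreducible K A"
  shows "\<exists>C>0. \<exists>m. \<forall>x\<in>{x\<in>K. N x = 1}. C *\<^sub>R (matpow_sum A m *v x) - e \<in> K"
proof -
  have A: "A \<in> pi_cone K" using irr unfolding K_irreducible_def by auto
  define S where "S = {x\<in>K. N x = 1}"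
  have "\<forall>x\<in>S. \<exists>c m U. c \<ge> 0 \<and> open U \<and> x \<in> U \<and>
      (\<forall>x'\<in>U. c *\<^sub>R (matpow_sum A m *v x') - e \<in> K)"
  proof
    fix x assume "x \<in> S"
    hence "x \<in> K" "x \<noteq> 0" unfolding S_def by auto
    thus "\<exists>c m U. c \<ge> 0 \<and> open U \<and> x \<in> U \<and> (\<forall>x'\<in>U. c *\<^sub>R (matpow_sum A m *v x') - e \<in> K)"
      using irreducible_local_domination[OF irr] by blast
  qed
  then obtain c m U where cmU: "\<And>x. x \<in> S \<Longrightarrow> c x \<ge> 0 \<and> open (U x) \<and> x \<in> U x \<and>
      (\<forall>x'\<in>U x. c x *\<^sub>R (matpow_sum A (m x) *v x') - e \<in> K)"
    by metis
  obtain T where T: "T \<subseteq> S" "finite T" "S \<subseteq> (\<Union>x\<in>T. U x)"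
    using compactE_image[OF compact_unit_slice[folded S_def], of S U] cmU by blast
  define C where "C = 1 + (\<Sum>x\<in>T. c x)"
  have "C *\<^sub>R (matpow_sum A (\<Sum>x\<in>T. m x) *v x) - e \<in> K" if x: "x \<in> S" for x
  proof -
    obtain x0 where x0: "x0 \<in> T" "x \<in> U x0" using T(3) x by blast
    show ?thesis
    proof (rule matpow_sum_domination_mono[OF A])
      show "x \<in> K" using x unfolding S_def by auto
      show "c x0 \<ge> 0" using cmU T x0 by blast
      show "c x0 \<le> C" unfolding C_def using T x0 cmU
        by (intro order_trans[OF member_le_sum[of x0 T c]]) auto
      show "m x0 \<le> (\<Sum>x\<in>T. m x)" using T x0 by (intro member_le_sum) auto
      show "c x0 *\<^sub>R (matpow_sum A (m x0) *v x) - e \<in> K" using cmU T x0 by blast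
    qed
  qed
  moreover have "C > 0" unfolding C_def using T cmU by (auto intro!: add_pos_nonneg sum_nonneg)
  ultimately show ?thesis unfolding S_def by blast
qed

lemma irreducible_uniform_domination:
  assumes irr: "K_irreducible K A"
  shows "\<exists>C>0. \<exists>m. \<forall>x\<in>K. C *\<^sub>R (matpow_sum A m *v x) - N x *\<^sub>R e \<in> K"
proof -
  obtain C m where C: "C > 0" and slice: "\<And>x. x \<in> K \<Longrightarrow> N x = 1 \<Longrightarrow>
      C *\<^sub>R (matpow_sum A m *v x) - e \<in> K"
    using irreducible_unit_slice_domination[OF irr] by auto
  have "C *\<^sub>R (matpow_sum A m *v x) - N x *\<^sub>R e \<in> K" if x: "x \<in> K" for x
  proof (cases "x = 0")
    case True thus ?thesis using zero_in_cone by simp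
  next
    case False
    hence Nx: "N x > 0" by (rule N_pos)
    have "N x *\<^sub>R (C *\<^sub>R (matpow_sum A m *v ((1 / N x) *\<^sub>R x)) - e) \<in> K"
      using x Nx by (intro cone_scaleR slice) (auto intro!: cone_scaleR simp: N_scaleR)
    thus ?thesis using Nx by (simp add: matrix_vector_mult_scaleR algebra_simps)
  qed
  thus ?thesis using C by blast
qed

section \<open>Positivity certificates\<close>

text \<open>The matrices \<open>g B\<close> are indexed by \<open>G\<close> rather than forming a set, so that repetitions
  are allowed: they arise when the elements of a certificate are replaced by nearby matrices.\<close>

definition certificate ::
    "'n rmat set \<Rightarrow> real \<Rightarrow> nat \<Rightarrow> 'n rmat set \<Rightarrow> ('n rmat \<Rightarrow> 'n rmat) \<Rightarrow> bool" where
  "certificate M \<delta> m G g \<longleftrightarrow> finite G \<and> G \<noteq> {} \<and> (\<forall>B\<in>G. g B \<in> M) \<and> \<delta> > 0 \<and> m \<ge> 1 \<and>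
     (\<forall>x\<in>K. matpow_sum (\<Sum>B\<in>G. g B) m *v x - (\<delta> * N x) *\<^sub>R e \<in> K)"

text \<open>If \<open>A = \<Sum> u\<^sub>B B\<close> is an irreducible convex combination, then \<open>Q = \<Sum> B \<ge>\<^sub>K A\<close> since all
  \<open>u\<^sub>B \<le> 1\<close>, so \<open>Q\<close> inherits the uniform domination of \<open>A\<close>.\<close>

lemma P_N_certificate:
  assumes "M \<in> P_N K"
  shows "\<exists>\<delta> m G. certificate M \<delta> m G id"
proof -
  from assms obtain A where M: "M \<subseteq> pi_cone K" and A: "A \<in> convex hull M" "K_irreducible K A"
    unfolding P_N_def by auto
  have A_pi: "A \<in> pi_cone K" using A(2) unfolding K_irreducible_def by auto
  obtain C m0 where C: "C > 0" "\<And>x. x \<in> K \<Longrightarrow> C *\<^sub>R (matpow_sum A m0 *v x) - N x *\<^sub>R e \<in> K"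
    using irreducible_uniform_domination[OF A(2)] by blast
  obtain G u where G: "finite G" "G \<subseteq> M" "\<And>x. x \<in> G \<Longrightarrow> 0 \<le> u x" "sum u G = 1"
      "(\<Sum>v\<in>G. u v *\<^sub>R v) = A"
    using A(1) unfolding convex_hull_explicit by blast
  define Q where "Q = (\<Sum>B\<in>G. id B)"
  have Q_pi: "Q \<in> pi_cone K" unfolding Q_def using G M by (intro sum_in_pi_cone) auto
  have QA: "Q *v z - A *v z \<in> K" if z: "z \<in> K" for z
  proof -
    have "Q *v z - A *v z = (\<Sum>B\<in>G. (1 - u B) *\<^sub>R (B *v z))"
      unfolding Q_def G(5)[symmetric] using G(1)
      by (simp add: matrix_vector_mult_sum_left scaleR_matrix_vector_assoc[symmetric]
          algebra_simps sum_subtractf)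
    also have "\<dots> \<in> K"
      using G M z member_le_sum[of _ G u] by (intro cone_sum cone_scaleR pi_cone_apply) auto
    finally show ?thesis .
  qed
  have "matpow_sum Q (Suc m0) *v x - ((1 / C) * N x) *\<^sub>R e \<in> K" if x: "x \<in> K" for x
  proof -
    have "C *\<^sub>R (matpow_sum A (Suc m0) *v x) - N x *\<^sub>R e \<in> K"
      using C by (intro matpow_sum_domination_mono[OF A_pi x _ order_refl _ C(2)[OF x]]) auto
    hence "(1 / C) *\<^sub>R (C *\<^sub>R (matpow_sum A (Suc m0) *v x) - N x *\<^sub>R e) \<in> K"
      using C(1) by (intro cone_scaleR) auto
    hence "(matpow_sum Q (Suc m0) *v x - matpow_sum A (Suc m0) *v x)
          + (1 / C) *\<^sub>R (C *\<^sub>R (matpow_sum A (Suc m0) *v x) - N x *\<^sub>R e) \<in> K"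
      using matpow_sum_dominates[OF A_pi Q_pi QA x] cone_add by blast
    thus ?thesis using C(1) by (simp add: algebra_simps)
  qed
  hence "certificate M (1 / C) (Suc m0) G id"
    unfolding certificate_def Q_def using G C(1) by auto
  thus ?thesis by blast
qed

text \<open>Since \<open>z \<le>\<^sub>K (\<parallel>z\<parallel> / r\<^sub>0) e\<close>, a small perturbation of \<open>P\<close> is absorbed by half of \<open>\<delta> N(x) e\<close>.\<close>

lemma dominance_perturb:
  assumes x: "x \<in> K" and dom: "P *v x - (\<delta> * N x) *\<^sub>R e \<in> K"
    and close: "norm (P' - P) \<le> \<delta> * \<alpha> * r0 / 2"
  shows "P' *v x - (\<delta> / 2 * N x) *\<^sub>R e \<in> K"
proof -
  define s where "s = \<delta> / 2 * N x"
  define D where "D = P' - P"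
  have "norm (D *v x) \<le> norm D * norm x" by (rule norm_matrix_vector_mult_le)
  also have "\<dots> \<le> norm D * (N x / \<alpha>)" using alpha by (intro mult_left_mono) (auto simp: field_simps)
  also have "\<dots> \<le> (\<delta> * \<alpha> * r0 / 2) * (N x / \<alpha>)"
    using close alpha N_nonneg unfolding D_def by (intro mult_right_mono) auto
  finally have "norm (D *v x) / r0 \<le> s" unfolding s_def using alpha r0 by (simp add: field_simps)
  hence "(s - norm (D *v x) / r0) *\<^sub>R e \<in> K" using e_in_cone by (intro cone_scaleR) auto
  moreover have "s *\<^sub>R e + s *\<^sub>R e = (\<delta> * N x) *\<^sub>R e"
    unfolding s_def scaleR_left_distrib[symmetric] by (simp add: field_simps)
  ultimately have "(s - norm (D *v x) / r0) *\<^sub>R e + ((norm (D *v x) / r0) *\<^sub>R e + D *v x)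
                   + (P *v x - (s *\<^sub>R e + s *\<^sub>R e)) \<in> K"
    using e_dominates[of "D *v x"] dom cone_add by auto
  moreover have "P' *v x - s *\<^sub>R e = (s - norm (D *v x) / r0) *\<^sub>R e
      + ((norm (D *v x) / r0) *\<^sub>R e + D *v x) + (P *v x - (s *\<^sub>R e + s *\<^sub>R e))"
    unfolding D_def by (simp add: matrix_vector_mult_diff_rdistrib vec_eq_iff algebra_simps)
  ultimately show ?thesis unfolding s_def by simp
qed

lemma certificate_perturb:
  assumes cert: "certificate M \<delta> m G g"
  shows "\<exists>\<eta>>0. \<forall>M'. (\<forall>B\<in>G. \<exists>B'\<in>M'. dist (g B) B' < \<eta>) \<longrightarrow>
                      (\<exists>g'. certificate M' (\<delta> / 2) m G g')"
proof -
  have G: "finite G" "G \<noteq> {}" and \<delta>: "\<delta> > 0" and m: "m \<ge> 1"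
    and dom: "\<And>x. x \<in> K \<Longrightarrow> matpow_sum (\<Sum>B\<in>G. g B) m *v x - (\<delta> * N x) *\<^sub>R e \<in> K"
    using cert unfolding certificate_def by auto
  define Q where "Q = (\<Sum>B\<in>G. g B)"
  have "\<delta> * \<alpha> * r0 / 2 > 0" using \<delta> alpha r0 by simp
  then obtain d where d: "d > 0"
    "\<And>Q'. dist Q' Q < d \<Longrightarrow> dist (matpow_sum Q' m) (matpow_sum Q m) < \<delta> * \<alpha> * r0 / 2"
    using continuous_matpow_sum[of Q m] unfolding continuous_at_eps_delta by blast
  have card: "card G > 0" using G by (simp add: card_gt_0_iff)
  define \<eta> where "\<eta> = d / real (card G)"
  have "\<exists>g'. certificate M' (\<delta> / 2) m G g'" if close: "\<forall>B\<in>G. \<exists>B'\<in>M'. dist (g B) B' < \<eta>" for M'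
  proof -
    obtain g' where g': "\<And>B. B \<in> G \<Longrightarrow> g' B \<in> M' \<and> dist (g B) (g' B) < \<eta>"
      using close by metis
    have "norm ((\<Sum>B\<in>G. g' B) - Q) \<le> (\<Sum>B\<in>G. norm (g' B - g B))"
      unfolding Q_def sum_subtractf[symmetric] by (rule norm_sum)
    also have "\<dots> < (\<Sum>B\<in>G. \<eta>)"
      using g' G by (intro sum_strict_mono) (auto simp: dist_norm norm_minus_commute)
    also have "\<dots> = d" unfolding \<eta>_def using card by simp
    finally have "norm (matpow_sum (\<Sum>B\<in>G. g' B) m - matpow_sum Q m) \<le> \<delta> * \<alpha> * r0 / 2"
      using d(2) by (simp add: dist_norm less_imp_le)
    hence "matpow_sum (\<Sum>B\<in>G. g' B) m *v x - (\<delta> / 2 * N x) *\<^sub>R e \<in> K" if "x \<in> K" for x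
      using dominance_perturb dom that unfolding Q_def by blast
    thus ?thesis unfolding certificate_def using G \<delta> m g' by (intro exI[of _ g']) auto
  qed
  moreover have "\<eta> > 0" unfolding \<eta>_def using d card by simp
  ultimately show ?thesis by blast
qed

end

text \<open>Expanding a power of a sum of \<open>|G|\<close> matrices and keeping the largest term.\<close>

lemma (in vec_norm) N_matpow_le_prods:
  assumes G: "finite G" "G \<noteq> {}" "\<And>B. B \<in> G \<Longrightarrow> g B \<in> M"
  shows "\<exists>S\<in>prods M j. N (U *v (matpow (\<Sum>B\<in>G. g B) j *v y))
                          \<le> real (card G) ^ j * N (U *v (S *v y))"
proof (induction j arbitrary: U)
  case 0 thus ?case by simp
next
  case (Suc j)
  define Q where "Q = (\<Sum>B\<in>G. g B)"
  define v where "v B = N (U *v (g B *v (matpow Q j *v y)))" for B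
  have "Max (v ` G) \<in> v ` G" using G by (intro Max_in) auto
  then obtain B0 where B0: "B0 \<in> G" "v B0 = Max (v ` G)" by auto
  hence B0_max: "v B \<le> v B0" if "B \<in> G" for B using G that by simp
  obtain S where S: "S \<in> prods M j"
    "N ((U ** g B0) *v (matpow Q j *v y)) \<le> real (card G) ^ j * N ((U ** g B0) *v (S *v y))"
    using Suc.IH[of "U ** g B0"] unfolding Q_def by blast
  have "N (U *v (matpow Q (Suc j) *v y)) = N (\<Sum>B\<in>G. U *v (g B *v (matpow Q j *v y)))"
    unfolding Q_def using G(1)
    by (simp add: matrix_vector_mul_assoc[symmetric] matrix_vector_mult_sum_left
        matrix_vector_mult_sum_right)
  also have "\<dots> \<le> (\<Sum>B\<in>G. v B)" unfolding v_def using G(1) by (rule N_sum_le)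
  also have "\<dots> \<le> real (card G) * v B0" using B0_max by (rule sum_bounded_above)
  also have "\<dots> \<le> real (card G) * (real (card G) ^ j * N ((U ** g B0) *v (S *v y)))"
    using S(2) unfolding v_def by (intro mult_left_mono) (auto simp: matrix_vector_mul_assoc matrix_mul_assoc)
  also have "\<dots> = real (card G) ^ Suc j * N (U *v ((g B0 ** S) *v y))"
    by (simp add: matrix_vector_mul_assoc matrix_mul_assoc)
  finally show ?case unfolding Q_def using G(3)[OF B0(1)] S(1) by force
qed

lemma (in vec_norm) N_matpow_sum_le_prods:
  assumes G: "finite G" "G \<noteq> {}" "\<And>B. B \<in> G \<Longrightarrow> g B \<in> M" and m: "m \<ge> 1"
  shows "\<exists>j<m. \<exists>S\<in>prods M j. N (U *v (matpow_sum (\<Sum>B\<in>G. g B) m *v y))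
                               \<le> (real m * real (card G) ^ m) * N (U *v (S *v y))"
proof -
  define Q where "Q = (\<Sum>B\<in>G. g B)"
  have "\<forall>j. \<exists>S. S \<in> prods M j \<and>
             N (U *v (matpow Q j *v y)) \<le> real (card G) ^ j * N (U *v (S *v y))"
    using N_matpow_le_prods[of G g M, OF G] unfolding Q_def by blast
  then obtain S where S: "\<And>j. S j \<in> prods M j"
    "\<And>j. N (U *v (matpow Q j *v y)) \<le> real (card G) ^ j * N (U *v (S j *v y))"
    by metis
  define w where "w j = N (U *v (S j *v y))" for j
  have "Max (w ` {..<m}) \<in> w ` {..<m}" using m by (intro Max_in) (auto simp: lessThan_empty_iff)
  then obtain j0 where j0: "j0 < m" "w j0 = Max (w ` {..<m})" by auto
  hence j0_max: "w j \<le> w j0" if "j < m" for j using that by simp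
  have card: "real (card G) \<ge> 1" using G by (simp add: Suc_leI card_gt_0_iff)
  have "N (U *v (matpow_sum Q m *v y)) \<le> (\<Sum>j<m. N (U *v (matpow Q j *v y)))"
    unfolding matpow_sum_def
    by (simp add: matrix_vector_mult_sum_left matrix_vector_mult_sum_right N_sum_le)
  also have "\<dots> \<le> (\<Sum>j<m. real (card G) ^ m * w j0)"
  proof (rule sum_mono)
    fix j assume "j \<in> {..<m}"
    hence "real (card G) ^ j * w j \<le> real (card G) ^ m * w j0"
      using j0_max[of j] card N_nonneg unfolding w_def by (intro mult_mono power_increasing) auto
    thus "N (U *v (matpow Q j *v y)) \<le> real (card G) ^ m * w j0"
      using S(2) unfolding w_def by (meson order_trans)
  qed
  finally show ?thesis unfolding Q_def w_def using j0(1) S(1) by (auto simp: mult.assoc)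
qed

context interior_frame
begin

text \<open>Any orbit segment \<open>U\<close> can be continued by a product \<open>S\<close> of length at most \<open>m\<close> that
  returns \<open>y\<close> to a multiple of \<open>e\<close>, losing at most the factor \<open>W / \<delta>\<close>.\<close>

definition orbit_continuable :: "'n rmat set \<Rightarrow> real \<Rightarrow> real \<Rightarrow> nat \<Rightarrow> bool" where
  "orbit_continuable M \<delta> W m \<longleftrightarrow> (\<forall>y t U. y \<in> K \<longrightarrow> U \<in> prods M t \<longrightarrow>
     (\<exists>j\<le>m. \<exists>S\<in>prods M j. \<delta> * N y * N (U *v e) \<le> W * N (U *v (S *v y))))"

lemma certificate_continuation:
  assumes cert: "certificate M \<delta> m G g" and M: "M \<subseteq> pi_cone K"
  shows "orbit_continuable M \<delta> (real m * real (card G) ^ m) m"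
  unfolding orbit_continuable_def
proof (intro allI impI)
  fix y t U assume y: "y \<in> K" and U: "U \<in> prods M t"
  define Q where "Q = (\<Sum>B\<in>G. g B)"
  have G: "finite G" "G \<noteq> {}" "\<And>B. B \<in> G \<Longrightarrow> g B \<in> M" and \<delta>: "\<delta> > 0" and m: "m \<ge> 1"
    and dom: "matpow_sum Q m *v y - (\<delta> * N y) *\<^sub>R e \<in> K"
    using cert y unfolding certificate_def Q_def by auto
  have U_pi: "U \<in> pi_cone K" using prods_in_pi_cone[OF M U] .
  have "U *v (matpow_sum Q m *v y) - (\<delta> * N y) *\<^sub>R (U *v e) \<in> K"
    using pi_cone_apply[OF U_pi dom] by (simp add: matrix_vector_mult_diff_distrib matrix_vector_mult_scaleR)
  moreover have "(\<delta> * N y) *\<^sub>R (U *v e) \<in> K"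
    using \<delta> N_nonneg pi_cone_apply[OF U_pi e_in_cone] by (intro cone_scaleR) auto
  ultimately have "N ((\<delta> * N y) *\<^sub>R (U *v e)) \<le> N (U *v (matpow_sum Q m *v y))" by (rule N_mono)
  hence "\<delta> * N y * N (U *v e) \<le> N (U *v (matpow_sum Q m *v y))"
    using \<delta> N_nonneg[of y] by (simp add: N_scaleR)
  moreover obtain j S where "j < m" "S \<in> prods M j"
    "N (U *v (matpow_sum Q m *v y)) \<le> (real m * real (card G) ^ m) * N (U *v (S *v y))"
    using N_matpow_sum_le_prods[of G g M, OF G m] unfolding Q_def by blast
  ultimately show "\<exists>j\<le>m. \<exists>S\<in>prods M j.
      \<delta> * N y * N (U *v e) \<le> (real m * real (card G) ^ m) * N (U *v (S *v y))"
    by (intro exI[of _ j]) (auto intro!: bexI[of _ S])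
qed

lemma continuation_iterate:
  assumes M: "M \<subseteq> pi_cone K" and \<delta>: "\<delta> > 0" and W: "W > 0"
    and cont: "orbit_continuable M \<delta> W m"
    and T: "T \<in> prods M t0"
  shows "\<exists>\<tau> P. P \<in> prods M \<tau> \<and> k * t0 \<le> \<tau> \<and> \<tau> \<le> k * (t0 + m) \<and>
                (\<delta> / W * N (T *v e)) ^ k * N e \<le> N (P *v e)"
proof (induction k)
  case 0 thus ?case by (intro exI[of _ 0] exI[of _ "mat 1"]) auto
next
  case (Suc k)
  define y where "y = \<delta> / W * N (T *v e)"
  have y0: "y \<ge> 0" unfolding y_def using \<delta> W N_nonneg by simp
  obtain \<tau> P where P: "P \<in> prods M \<tau>" "k * t0 \<le> \<tau>" "\<tau> \<le> k * (t0 + m)"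
      "y ^ k * N e \<le> N (P *v e)"
    using Suc.IH unfolding y_def by blast
  have "P *v e \<in> K" using pi_cone_apply[OF prods_in_pi_cone[OF M P(1)] e_in_cone] .
  then obtain j S where S: "j \<le> m" "S \<in> prods M j"
      "\<delta> * N (P *v e) * N (T *v e) \<le> W * N (T *v (S *v (P *v e)))"
    using cont T unfolding orbit_continuable_def by blast
  have "y ^ Suc k * N e \<le> y * N (P *v e)" using mult_left_mono[OF P(4) y0] by (simp add: mult.assoc)
  also have "\<dots> = (\<delta> * N (P *v e) * N (T *v e)) / W" unfolding y_def by simp
  also have "\<dots> \<le> N (T *v (S *v (P *v e)))" using S(3) W by (simp add: divide_le_eq mult.commute)
  also have "\<dots> = N ((T ** (S ** P)) *v e)" by (simp add: matrix_vector_mul_assoc)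
  finally have "y ^ Suc k * N e \<le> N ((T ** (S ** P)) *v e)" .
  moreover have "T ** (S ** P) \<in> prods M (t0 + (j + \<tau>))" by (intro prods_mult T S P)
  moreover have "Suc k * t0 \<le> t0 + (j + \<tau>)" "t0 + (j + \<tau>) \<le> Suc k * (t0 + m)" using P S by auto
  ultimately show ?case unfolding y_def by blast
qed

lemma orbit_bound_above_jsr:
  assumes bounded: "bounded_matrix_set M R" and M: "M \<subseteq> pi_cone K"
    and \<delta>: "\<delta> > 0" and W: "W > 0"
    and cont: "orbit_continuable M \<delta> W m"
    and T: "T \<in> prods M t0" and t0: "t0 > 0" and q: "q > jsr M"
  shows "N (T *v e) \<le> (W / \<delta>) * max 1 (q ^ m) * q ^ t0"
proof -
  interpret bounded_matrix_set M R by (rule bounded)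
  have q0: "q > 0" using q jsr_nonneg by linarith
  obtain k0 where k0: "\<And>t S. t \<ge> k0 \<Longrightarrow> S \<in> prods M t \<Longrightarrow> norm S \<le> q ^ t"
    using eventually_norm_prods_le[OF q] by blast
  define y where "y = \<delta> / W * N (T *v e)"
  define z where "z = q ^ t0 * max 1 (q ^ m)"
  have "\<forall>k\<ge>k0. y ^ k \<le> (\<beta> * norm e / N e) * z ^ k"
  proof (intro allI impI)
    fix k assume k: "k \<ge> k0"
    obtain \<tau> P where P: "P \<in> prods M \<tau>" "k * t0 \<le> \<tau>" "\<tau> \<le> k * (t0 + m)"
        "y ^ k * N e \<le> N (P *v e)"
      using continuation_iterate[OF M \<delta> W cont T] unfolding y_def by blast
    have "k \<le> k * t0" using t0 by simp
    hence "\<tau> \<ge> k0" using P(2) k by linarith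
    hence "norm P \<le> q ^ \<tau>" using k0 P(1) by blast
    also have "q ^ \<tau> \<le> z ^ k" unfolding z_def using q0 P(2,3) by (rule power_le_power_max)
    finally have "norm P \<le> z ^ k" .
    have "y ^ k * N e \<le> \<beta> * norm e * norm P" using P(4) N_matrix_e_le[of P] by linarith
    also have "\<dots> \<le> \<beta> * norm e * z ^ k" using \<open>norm P \<le> z ^ k\<close> beta(1) by (intro mult_left_mono) auto
    finally show "y ^ k \<le> (\<beta> * norm e / N e) * z ^ k"
      using N_pos[OF e_nonzero] by (simp add: field_simps)
  qed
  moreover have "z > 0" unfolding z_def using q0 by simp
  moreover have "y \<ge> 0" unfolding y_def using \<delta> W N_nonneg by simp
  ultimately have "y \<le> z" using pow_le_const_times_pow_imp_le by blast
  thus ?thesis unfolding y_def z_def using \<delta> W by (simp add: field_simps)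
qed

lemma orbit_bound_jsr:
  assumes bounded: "bounded_matrix_set M R" and M: "M \<subseteq> pi_cone K"
    and \<delta>: "\<delta> > 0" and W: "W > 0"
    and cont: "orbit_continuable M \<delta> W m"
    and T: "T \<in> prods M t"
  shows "N (T *v e) \<le> max (N e) ((W / \<delta>) * max 1 (jsr M ^ m)) * jsr M ^ t"
proof (cases "t = 0")
  case True thus ?thesis using T by simp
next
  case False
  define f where "f q = (W / \<delta>) * max 1 (q ^ m) * q ^ t" for q :: real
  have "(f \<longlongrightarrow> f (jsr M)) (at_right (jsr M))" unfolding f_def by (intro tendsto_intros)
  moreover have "eventually (\<lambda>q. N (T *v e) \<le> f q) (at_right (jsr M))"
    unfolding f_def using orbit_bound_above_jsr[OF assms(1-5) T] False
    by (intro eventually_at_right_less[THEN eventually_mono]) auto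
  ultimately have "N (T *v e) \<le> f (jsr M)" by (rule tendsto_lowerbound) simp
  also have "\<dots> \<le> max (N e) ((W / \<delta>) * max 1 (jsr M ^ m)) * jsr M ^ t"
    unfolding f_def using bounded_matrix_set.jsr_nonneg[OF bounded]
    by (intro mult_right_mono) auto
  finally show ?thesis .
qed

lemma orbit_bound_of_certificate:
  assumes cert: "certificate M \<delta> m G g" and M: "M \<subseteq> pi_cone K"
    and bounded: "bounded_matrix_set M R" and T: "T \<in> prods M t"
  shows "N (T *v e) \<le> max (N e) (real m * real (card G) ^ m / \<delta> * max 1 (R ^ m)) * jsr M ^ t"
proof -
  interpret bounded_matrix_set M R by (rule bounded)
  have \<delta>: "\<delta> > 0" and W: "real m * real (card G) ^ m > 0"
    using cert unfolding certificate_def by (auto simp: card_gt_0_iff)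
  have "N (T *v e) \<le> max (N e) (real m * real (card G) ^ m / \<delta> * max 1 (jsr M ^ m)) * jsr M ^ t"
    using orbit_bound_jsr[OF bounded M \<delta> W certificate_continuation[OF cert M] T] .
  also have "\<dots> \<le> max (N e) (real m * real (card G) ^ m / \<delta> * max 1 (R ^ m)) * jsr M ^ t"
    using jsr_nonneg jsr_le W \<delta>
    by (intro mult_right_mono max.mono mult_left_mono power_mono) auto
  finally show ?thesis .
qed

lemma orbit_bound_all_vectors:
  assumes M: "M \<subseteq> pi_cone K" and B: "B \<ge> 0"
    and bound: "\<And>t T. T \<in> prods M t \<Longrightarrow> N (T *v e) \<le> B * \<rho> ^ t"
    and S: "S \<in> prods M t"
  shows "N (S *v x) \<le> (3 * B / (\<alpha> * r0)) * \<rho> ^ t * N x"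
proof -
  define c where "c = N x / (\<alpha> * r0)"
  have c: "c \<ge> 0" unfolding c_def using alpha r0 N_nonneg by simp
  have S_pi: "S \<in> pi_cone K" using prods_in_pi_cone[OF M S] .
  have "(2 * c) *\<^sub>R (S *v e) - S *v (c *\<^sub>R e + x) = S *v (c *\<^sub>R e - x)"
    by (simp add: matrix_vector_right_distrib matrix_vector_mult_diff_distrib
        matrix_vector_mult_scaleR vec_eq_iff algebra_simps)
  hence "(2 * c) *\<^sub>R (S *v e) - S *v (c *\<^sub>R e + x) \<in> K"
    using pi_cone_apply[OF S_pi] e_dominates_N[of x] unfolding c_def by simp
  moreover have "S *v (c *\<^sub>R e + x) \<in> K"
    using pi_cone_apply[OF S_pi] e_dominates_N[of x] unfolding c_def by simp
  ultimately have "N (S *v (c *\<^sub>R e + x)) \<le> 2 * c * N (S *v e)"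
    using N_mono c by (fastforce simp: N_scaleR)
  moreover have "S *v x = S *v (c *\<^sub>R e + x) - c *\<^sub>R (S *v e)"
    by (simp add: matrix_vector_right_distrib matrix_vector_mult_scaleR)
  hence "N (S *v x) \<le> N (S *v (c *\<^sub>R e + x)) + c * N (S *v e)"
    using N_triangle_diff c by (metis N_scaleR abs_of_nonneg)
  ultimately have "N (S *v x) \<le> 3 * c * N (S *v e)" by linarith
  also have "\<dots> \<le> 3 * c * (B * \<rho> ^ t)" using bound[OF S] c by (intro mult_left_mono) auto
  also have "\<dots> = (3 * B / (\<alpha> * r0)) * \<rho> ^ t * N x" unfolding c_def by (simp add: field_simps)
  finally show ?thesis .
qed

end

section \<open>Uniformity over a compact family\<close>

lemma hausdorff_dist_commute: "hausdorff_dist M M' = hausdorff_dist M' M"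
  by (simp add: hausdorff_dist_def max.commute)

lemma hausdorff_dist_close_point:
  assumes M: "compact M" and M': "compact M'" "M' \<noteq> {}"
    and B: "B \<in> M" and d: "hausdorff_dist M M' < d"
  shows "\<exists>B'\<in>M'. dist B B' < d"
proof -
  have "compact ((\<lambda>A. infdist A M') ` M)"
    by (intro compact_continuous_image continuous_on_infdist continuous_on_id M)
  hence "infdist B M' \<le> (SUP A\<in>M. infdist A M')"
    using B by (intro cSUP_upper bounded_imp_bdd_above compact_imp_bounded)
  hence "infdist B M' < d" using d unfolding hausdorff_dist_def by linarith
  moreover obtain B' where "B' \<in> M'" "infdist B M' = dist B B'"
    using infdist_attains_inf[OF compact_imp_closed[OF M'(1)] M'(2)] by blast
  ultimately show ?thesis by auto
qed

lemma P_N_bounded_matrix_set: "M \<in> P_N K \<Longrightarrow> \<exists>R. bounded_matrix_set M R"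
  unfolding P_N_def by (auto intro: compact_bounded_matrix_set)

lemma P_N_jsr_nonneg: "M \<in> P_N K \<Longrightarrow> jsr M \<ge> 0"
  using P_N_bounded_matrix_set bounded_matrix_set.jsr_nonneg by blast

context interior_frame
begin

text \<open>A certificate for \<open>M\<^sub>0\<close> yields one with half the constant for every \<open>M\<close> close to \<open>M\<^sub>0\<close>,
  and such \<open>M\<close> are uniformly bounded, so the orbit bound is uniform near \<open>M\<^sub>0\<close>.\<close>

lemma P_N_locally_uniform_orbit_bound:
  assumes M0: "M0 \<in> P_N K"
  shows "\<exists>\<eta>>0. \<exists>B. \<forall>M\<in>P_N K. hausdorff_dist M M0 < \<eta> \<longrightarrow>
           (\<forall>t. \<forall>T\<in>prods M t. N (T *v e) \<le> B * jsr M ^ t)"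
proof -
  have M0': "M0 \<noteq> {}" "compact M0" using M0 unfolding P_N_def by auto
  obtain \<delta> m G where cert: "certificate M0 \<delta> m G id" using P_N_certificate[OF M0] by blast
  obtain \<eta> where \<eta>: "\<eta> > 0" and perturb:
      "\<And>M'. \<forall>B\<in>G. \<exists>B'\<in>M'. dist B B' < \<eta> \<Longrightarrow> \<exists>g. certificate M' (\<delta> / 2) m G g"
    using certificate_perturb[OF cert] by auto
  obtain R0 where R0: "\<And>A. A \<in> M0 \<Longrightarrow> norm A \<le> R0"
    using compact_bounded_matrix_set[OF M0'(2,1)] unfolding bounded_matrix_set_def by blast
  define B where "B = max (N e) (real m * real (card G) ^ m / (\<delta> / 2) * max 1 ((R0 + 1) ^ m))"
  have "\<forall>t. \<forall>T\<in>prods M t. N (T *v e) \<le> B * jsr M ^ t"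
    if M: "M \<in> P_N K" and close: "hausdorff_dist M M0 < min \<eta> 1" for M
  proof -
    have M': "M \<noteq> {}" "compact M" "M \<subseteq> pi_cone K" using M unfolding P_N_def by auto
    have "\<forall>B\<in>G. \<exists>B'\<in>M. dist B B' < \<eta>"
      using cert close hausdorff_dist_close_point[OF M0'(2) M'(2,1)]
      unfolding certificate_def hausdorff_dist_commute[of M] by auto
    then obtain g where cert': "certificate M (\<delta> / 2) m G g" using perturb by blast
    have "bounded_matrix_set M (R0 + 1)"
    proof
      fix A assume "A \<in> M"
      then obtain A0 where A0: "A0 \<in> M0" "norm (A - A0) < 1"
        using hausdorff_dist_close_point[OF M'(2) M0'(2,1)] close by (force simp: dist_norm)
      thus "norm A \<le> R0 + 1" using R0[OF A0(1)] norm_triangle_sub[of A A0] by linarith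
    qed (rule M'(1))
    thus ?thesis using orbit_bound_of_certificate[OF cert' M'(3)] unfolding B_def by blast
  qed
  thus ?thesis using \<eta> by (intro exI[of _ "min \<eta> 1"]) auto
qed

lemma uniform_orbit_bound:
  assumes X: "X \<subseteq> P_N K" and compact: "hausdorff_compact X"
  shows "\<exists>B\<ge>0. \<forall>M\<in>X. \<forall>t. \<forall>T\<in>prods M t. N (T *v e) \<le> B * jsr M ^ t"
proof (rule ccontr)
  assume "\<not> ?thesis"
  hence "\<forall>k::nat. \<exists>M. M \<in> X \<and> (\<exists>t. \<exists>T\<in>prods M t. N (T *v e) > real k * jsr M ^ t)"
    by (meson not_le of_nat_0_le_iff)
  then obtain Ms where Ms: "\<And>k. Ms k \<in> X"
      "\<And>k. \<exists>t. \<exists>T\<in>prods (Ms k) t. N (T *v e) > real k * jsr (Ms k) ^ t"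
    by metis
  obtain M0 r where M0: "M0 \<in> X" "strict_mono r" "(\<lambda>k. hausdorff_dist (Ms (r k)) M0) \<longlonglongrightarrow> 0"
    using compact Ms(1) unfolding hausdorff_compact_def by blast
  obtain \<eta> B where \<eta>: "\<eta> > 0" and B: "\<And>M t T. M \<in> P_N K \<Longrightarrow> hausdorff_dist M M0 < \<eta> \<Longrightarrow>
      T \<in> prods M t \<Longrightarrow> N (T *v e) \<le> B * jsr M ^ t"
    using P_N_locally_uniform_orbit_bound[of M0] M0(1) X by blast
  have "eventually (\<lambda>k. hausdorff_dist (Ms (r k)) M0 < \<eta>) sequentially"
    using order_tendstoD(2)[OF M0(3) \<eta>] .
  then obtain k0 where k0: "\<And>k. k \<ge> k0 \<Longrightarrow> hausdorff_dist (Ms (r k)) M0 < \<eta>"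
    unfolding eventually_sequentially by blast
  define k where "k = max k0 (nat \<lceil>B\<rceil> + 1)"
  obtain t T where T: "T \<in> prods (Ms (r k)) t" "N (T *v e) > real (r k) * jsr (Ms (r k)) ^ t"
    using Ms(2) by blast
  have "N (T *v e) \<le> B * jsr (Ms (r k)) ^ t"
    using B[OF _ k0 T(1)] Ms(1) X unfolding k_def by auto
  also have "\<dots> \<le> real (r k) * jsr (Ms (r k)) ^ t"
  proof (rule mult_right_mono)
    show "B \<le> real (r k)" using seq_suble[OF M0(2), of k] unfolding k_def by linarith
    show "jsr (Ms (r k)) ^ t \<ge> 0" using P_N_jsr_nonneg[of "Ms (r k)" K] Ms(1)[of "r k"] X by auto
  qed
  finally show False using T(2) by linarith
qed

end

section \<open>Extremal norms\<close>

definition orbit_sup_norm ::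
    "('n::finite) rmat set \<Rightarrow> ('n rvec \<Rightarrow> real) \<Rightarrow> real \<Rightarrow> 'n rvec \<Rightarrow> real" where
  "orbit_sup_norm M N \<rho> x = (SUP (t, S)\<in>(SIGMA t:UNIV. prods M t). N (S *v x) / \<rho> ^ t)"

locale orbit_normalized = monotone_norm K N
  for K :: "('n::finite) rvec set" and N :: "'n rvec \<Rightarrow> real" +
  fixes M :: "'n rmat set" and \<rho> c :: real
  assumes M_pi: "M \<subseteq> pi_cone K" and rho_pos: "\<rho> > 0"
    and orbit_bound: "\<And>t S x. S \<in> prods M t \<Longrightarrow> N (S *v x) \<le> c * \<rho> ^ t * N x"
begin

lemma orbit_sup_norm_ge: "S \<in> prods M t \<Longrightarrow> N (S *v x) / \<rho> ^ t \<le> orbit_sup_norm M N \<rho> x"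
proof -
  assume S: "S \<in> prods M t"
  have "bdd_above ((\<lambda>(t, S). N (S *v x) / \<rho> ^ t) ` (SIGMA t:UNIV. prods M t))"
    using orbit_bound rho_pos
    by (intro bdd_aboveI2[of _ _ "c * N x"]) (auto simp: pos_divide_le_eq mult_ac)
  moreover have "(t, S) \<in> (SIGMA t:UNIV. prods M t)" using S by simp
  ultimately show ?thesis unfolding orbit_sup_norm_def
    using cSUP_upper[of "(t, S)" "SIGMA t:UNIV. prods M t" "\<lambda>(t, S). N (S *v x) / \<rho> ^ t"] by simp
qed

lemma orbit_sup_norm_least:
  assumes "\<And>t S. S \<in> prods M t \<Longrightarrow> N (S *v x) / \<rho> ^ t \<le> a"
  shows "orbit_sup_norm M N \<rho> x \<le> a"
proof -
  have "(0, mat 1) \<in> (SIGMA t:UNIV. prods M t)" by simp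
  hence "(SIGMA t:UNIV. prods M t) \<noteq> {}" by blast
  thus ?thesis unfolding orbit_sup_norm_def by (rule cSUP_least) (use assms in auto)
qed

lemma N_le_orbit_sup_norm: "N x \<le> orbit_sup_norm M N \<rho> x"
  using orbit_sup_norm_ge[of "mat 1" 0 x] by simp

lemma orbit_sup_norm_le: "orbit_sup_norm M N \<rho> x \<le> c * N x"
  using orbit_bound rho_pos by (intro orbit_sup_norm_least) (simp add: pos_divide_le_eq mult_ac)

lemma orbit_sup_norm_scaleR_le: "orbit_sup_norm M N \<rho> (a *\<^sub>R x) \<le> \<bar>a\<bar> * orbit_sup_norm M N \<rho> x"
proof (rule orbit_sup_norm_least)
  fix t S assume "S \<in> prods M t"
  hence "\<bar>a\<bar> * (N (S *v x) / \<rho> ^ t) \<le> \<bar>a\<bar> * orbit_sup_norm M N \<rho> x"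
    by (intro mult_left_mono orbit_sup_norm_ge) auto
  thus "N (S *v (a *\<^sub>R x)) / \<rho> ^ t \<le> \<bar>a\<bar> * orbit_sup_norm M N \<rho> x"
    by (simp add: matrix_vector_mult_scaleR N_scaleR)
qed

lemma is_norm_orbit_sup_norm: "is_norm (orbit_sup_norm M N \<rho>)"
  unfolding is_norm_def
proof (intro conjI allI)
  fix x
  show "orbit_sup_norm M N \<rho> x \<ge> 0" using N_le_orbit_sup_norm[of x] N_nonneg[of x] by linarith
  show "orbit_sup_norm M N \<rho> x = 0 \<longleftrightarrow> x = 0"
    using N_le_orbit_sup_norm[of x] orbit_sup_norm_le[of x] N_nonneg[of x] N_eq_0_iff[of x]
    by (metis N_0 linorder_not_le mult_zero_right order_antisym)
next
  fix a x
  show "orbit_sup_norm M N \<rho> (a *\<^sub>R x) = \<bar>a\<bar> * orbit_sup_norm M N \<rho> x"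
  proof (cases "a = 0")
    case True thus ?thesis
      using N_le_orbit_sup_norm[of 0] orbit_sup_norm_le[of 0] by simp
  next
    case False
    have "orbit_sup_norm M N \<rho> x \<le> \<bar>1 / a\<bar> * orbit_sup_norm M N \<rho> (a *\<^sub>R x)"
      using orbit_sup_norm_scaleR_le[of "1 / a" "a *\<^sub>R x"] False by simp
    thus ?thesis using orbit_sup_norm_scaleR_le[of a x] False by (simp add: field_simps)
  qed
next
  fix x y
  show "orbit_sup_norm M N \<rho> (x + y) \<le> orbit_sup_norm M N \<rho> x + orbit_sup_norm M N \<rho> y"
  proof (rule orbit_sup_norm_least)
    fix t S assume S: "S \<in> prods M t"
    have "N (S *v (x + y)) / \<rho> ^ t \<le> N (S *v x) / \<rho> ^ t + N (S *v y) / \<rho> ^ t"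
      using rho_pos N_triangle
      by (simp add: matrix_vector_right_distrib add_divide_distrib[symmetric] divide_right_mono)
    also have "\<dots> \<le> orbit_sup_norm M N \<rho> x + orbit_sup_norm M N \<rho> y"
      using S by (intro add_mono orbit_sup_norm_ge)
    finally show "N (S *v (x + y)) / \<rho> ^ t \<le> orbit_sup_norm M N \<rho> x + orbit_sup_norm M N \<rho> y" .
  qed
qed

lemma K_monotone_orbit_sup_norm: "K_monotone K (orbit_sup_norm M N \<rho>)"
  unfolding K_monotone_def cone_ge_def
proof (intro allI impI)
  fix x y assume xy: "x - y \<in> K \<and> y - 0 \<in> K"
  show "orbit_sup_norm M N \<rho> y \<le> orbit_sup_norm M N \<rho> x"
  proof (rule orbit_sup_norm_least)
    fix t S assume S: "S \<in> prods M t"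
    have S_pi: "S \<in> pi_cone K" using prods_in_pi_cone[OF M_pi S] .
    have "N (S *v y) \<le> N (S *v x)"
      using pi_cone_apply_diff[OF S_pi, of x y] pi_cone_apply[OF S_pi, of y] xy by (intro N_mono) auto
    hence "N (S *v y) / \<rho> ^ t \<le> N (S *v x) / \<rho> ^ t" using rho_pos by (simp add: divide_right_mono)
    thus "N (S *v y) / \<rho> ^ t \<le> orbit_sup_norm M N \<rho> x" using orbit_sup_norm_ge[OF S, of x] by linarith
  qed
qed

lemma orbit_sup_norm_prods:
  assumes S: "S \<in> prods M t"
  shows "orbit_sup_norm M N \<rho> (S *v x) \<le> \<rho> ^ t * orbit_sup_norm M N \<rho> x"
proof (rule orbit_sup_norm_least)
  fix t' P assume "P \<in> prods M t'"
  hence "\<rho> ^ t * (N ((P ** S) *v x) / \<rho> ^ (t' + t)) \<le> \<rho> ^ t * orbit_sup_norm M N \<rho> x"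
    using S rho_pos by (intro mult_left_mono orbit_sup_norm_ge prods_mult) auto
  thus "N (P *v (S *v x)) / \<rho> ^ t' \<le> \<rho> ^ t * orbit_sup_norm M N \<rho> x"
    using rho_pos by (simp add: matrix_vector_mul_assoc power_add)
qed

end

lemma (in interior_frame) extremal_norm_exists:
  assumes M: "M \<subseteq> pi_cone K" and B: "B \<ge> 0" and \<rho>: "jsr M \<ge> 0"
    and bound: "\<And>t T. T \<in> prods M t \<Longrightarrow> N (T *v e) \<le> B * jsr M ^ t"
  shows "\<exists>v. is_norm v \<and> K_monotone K v \<and> extremal M v \<and> ecc N v \<le> max 1 (3 * B / (\<alpha> * r0))"
proof (cases "jsr M = 0")
  case True
  have "N (S *v x) \<le> jsr M ^ t * N x" if S: "S \<in> prods M t" for S t x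
  proof (cases t)
    case 0 thus ?thesis using S by simp
  next
    case (Suc t')
    thus ?thesis using orbit_bound_all_vectors[OF M B bound S, of x] True by simp
  qed
  moreover have "ecc N N \<le> 1" by (rule ecc_le) auto
  ultimately show ?thesis using norm monotone unfolding extremal_def by (intro exI[of _ N]) auto
next
  case False
  interpret orbit_normalized K N M "jsr M" "3 * B / (\<alpha> * r0)"
    using M \<rho> False orbit_bound_all_vectors[OF M B bound] by unfold_locales auto
  have "ecc N (orbit_sup_norm M N (jsr M)) \<le> 3 * B / (\<alpha> * r0)"
    by (rule ecc_le[OF N_le_orbit_sup_norm orbit_sup_norm_le])
  thus ?thesis using is_norm_orbit_sup_norm K_monotone_orbit_sup_norm orbit_sup_norm_prods
    unfolding extremal_def by (intro exI[of _ "orbit_sup_norm M N (jsr M)"]) auto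
qed

theorem mainTheorem9:
  fixes K :: "('n::finite) rvec set"
    and N :: "'n rvec \<Rightarrow> real"
    and X :: "'n rmat set set"
  assumes "proper_cone K"
    and "is_norm N" and "K_monotone K N"
    and "X \<subseteq> P_N K"
    and "hausdorff_compact X"
  shows "\<exists>C::real. 0 < C \<and> (\<forall>M\<in>X. \<exists>v. is_norm v \<and> K_monotone K v \<and>
            extremal M v \<and> ecc N v < C)"
proof -
  interpret monotone_norm K N using assms(1-3) by unfold_locales
  obtain e r0 where r0: "r0 > 0" "cball e r0 \<subseteq> K"
    using interior_cone_nonempty mem_interior_cball by blast
  obtain \<alpha> \<beta> where \<alpha>: "\<alpha> > 0" "\<And>x. \<alpha> * norm x \<le> N x" and \<beta>: "\<beta> > 0" "\<And>x. N x \<le> \<beta> * norm x"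
    using norm_le_N N_le_norm by blast
  interpret interior_frame K N e r0 \<alpha> \<beta> using r0 \<alpha> \<beta> by unfold_locales auto
  obtain B where B: "B \<ge> 0" "\<And>M t T. M \<in> X \<Longrightarrow> T \<in> prods M t \<Longrightarrow> N (T *v e) \<le> B * jsr M ^ t"
    using uniform_orbit_bound[OF assms(4,5)] by blast
  have "\<exists>v. is_norm v \<and> K_monotone K v \<and> extremal M v \<and> ecc N v < max 1 (3 * B / (\<alpha> * r0)) + 1"
    if M: "M \<in> X" for M
  proof -
    have "M \<in> P_N K" using M assms(4) by blast
    hence "M \<subseteq> pi_cone K" "jsr M \<ge> 0" using P_N_jsr_nonneg unfolding P_N_def by auto
    thus ?thesis using extremal_norm_exists[of M B] B M by fastforce
  qed
  thus ?thesis by (intro exI[of _ "max 1 (3 * B / (\<alpha> * r0)) + 1"]) auto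
qed

end
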